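(* Let $\mathcal{C}$ be a skeletally small triangulated category. For a dense subcategory $\mathcal{D}$ of $\mathcal{C}$ let $\delta^{\mathcal{D}}_{\mathbb{Q}}\colon G(\mathcal{D})_{\mathbb{Q}}\to G(\mathcal{C})_{\mathbb{Q}}$ be the map induced by inclusion (which is injective). Then: (1) For every $\mathbb{Q}$-subspace $H$ of $G(\mathcal{C})_{\mathbb{Q}}$ there exists a radical dense subcategory $\mathcal{D}$ of $\mathcal{C}$ with $\operatorname{image}\delta^{\mathcal{D}}_{\mathbb{Q}} = H$. (2) If $\mathcal{D}_1,\mathcal{D}_2$ are radical dense subcategories of $\mathcal{C}$ with $\operatorname{image}\delta^{\mathcal{D}_1}_{\mathbb{Q}} = \operatorname{image}\delta^{\mathcal{D}_2}_{\mathbb{Q}}$, then $\mathcal{D}_1=\mathcal{D}_2$. Write $\mathcal{D}_H$ for the unique radical dense subcategory with $\operatorname{image}\delta^{\mathcal{D}_H}_{\mathbb{Q}} = H$. (3) For $\mathbb{Q}$-subspaces $H_1,H_2$ of $G(\mathcal{C})_{\mathbb{Q}}$, $\mathcal{D}_{H_1}\subseteq \mathcal{D}_{H_2}$ if and only if $H_1\subseteq H_2$.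
   Context: $G(\mathcal{C})$ is the Grothendieck group of the triangulated category $\mathcal{C}$: free abelian group on isomorphism classes of objects modulo $[V]=[U]+[W]$ for each exact triangle $U\to V\to W\to U[1]$; $H_{\mathbb{Q}}=H\otimes_{\mathbb{Z}}\mathbb{Q}$. A triangulated subcategory is a full subcategory closed under $[\pm1]$, isomorphisms and cones of triangles whose first two terms lie in it. A triangulated subcategory $\mathcal{D}$ is dense if for every $U\in\mathcal{C}$ there is $V\in\mathcal{C}$ with $U\oplus V\in\mathcal{D}$; it is radical if $U^n\in\mathcal{D}$ for some $n\ge1$ implies $U\in\mathcal{D}$. *)

theory Defs
  imports Complex_Main "HOL-Library.Function_Algebras"
begin

text \<open>Objects form a set Ob, so the category is automatically (skeletally) small.
A triangle (X,Y,Z,f,g,h) stands for X --f--> Y --g--> Z --h--> X[1].\<close>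

record ('o, 'm) tricat =
  Ob   :: "'o set"
  Hom  :: "'o \<Rightarrow> 'o \<Rightarrow> 'm set"
  cmp  :: "'m \<Rightarrow> 'm \<Rightarrow> 'm"      (* cmp g f = g o f *)
  idm  :: "'o \<Rightarrow> 'm"
  madd :: "'m \<Rightarrow> 'm \<Rightarrow> 'm"
  mneg :: "'m \<Rightarrow> 'm"
  zm   :: "'o \<Rightarrow> 'o \<Rightarrow> 'm"
  sh   :: "'o \<Rightarrow> 'o"
  shm  :: "'m \<Rightarrow> 'm"
  Tri  :: "('o \<times> 'o \<times> 'o \<times> 'm \<times> 'm \<times> 'm) set"

definition is_iso :: "('o,'m) tricat \<Rightarrow> 'm \<Rightarrow> 'o \<Rightarrow> 'o \<Rightarrow> bool" where
  "is_iso C f X Y \<longleftrightarrow> f \<in> Hom C X Y \<and>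
     (\<exists>g \<in> Hom C Y X. cmp C g f = idm C X \<and> cmp C f g = idm C Y)"

definition isomorphic :: "('o,'m) tricat \<Rightarrow> 'o \<Rightarrow> 'o \<Rightarrow> bool" where
  "isomorphic C X Y \<longleftrightarrow> X \<in> Ob C \<and> Y \<in> Ob C \<and> (\<exists>f. is_iso C f X Y)"

definition is_zero_obj :: "('o,'m) tricat \<Rightarrow> 'o \<Rightarrow> bool" where
  "is_zero_obj C Z \<longleftrightarrow> Z \<in> Ob C \<and>
     (\<forall>X \<in> Ob C. Hom C Z X = {zm C Z X} \<and> Hom C X Z = {zm C X Z})"

definition is_dsum :: "('o,'m) tricat \<Rightarrow> 'o \<Rightarrow> 'o \<Rightarrow> 'o \<Rightarrow> bool" where
  "is_dsum C X Y S \<longleftrightarrow> X \<in> Ob C \<and> Y \<in> Ob C \<and> S \<in> Ob C \<and>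
     (\<exists>p1 p2 i1 i2. p1 \<in> Hom C S X \<and> p2 \<in> Hom C S Y \<and> i1 \<in> Hom C X S \<and> i2 \<in> Hom C Y S \<and>
        cmp C p1 i1 = idm C X \<and> cmp C p2 i2 = idm C Y \<and>
        cmp C p1 i2 = zm C Y X \<and> cmp C p2 i1 = zm C X Y \<and>
        madd C (cmp C i1 p1) (cmp C i2 p2) = idm C S)"

definition is_tri_shape :: "('o,'m) tricat \<Rightarrow> ('o \<times> 'o \<times> 'o \<times> 'm \<times> 'm \<times> 'm) \<Rightarrow> bool" where
  "is_tri_shape C T \<longleftrightarrow> (case T of (X,Y,Z,f,g,h) \<Rightarrow>
     X \<in> Ob C \<and> Y \<in> Ob C \<and> Z \<in> Ob C \<and> f \<in> Hom C X Y \<and> g \<in> Hom C Y Z \<and> h \<in> Hom C Z (sh C X))"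

definition tri_mor :: "('o,'m) tricat \<Rightarrow> ('o \<times> 'o \<times> 'o \<times> 'm \<times> 'm \<times> 'm) \<Rightarrow>
    ('o \<times> 'o \<times> 'o \<times> 'm \<times> 'm \<times> 'm) \<Rightarrow> 'm \<Rightarrow> 'm \<Rightarrow> 'm \<Rightarrow> bool" where
  "tri_mor C T T' a b c \<longleftrightarrow> (case T of (X,Y,Z,f,g,h) \<Rightarrow> case T' of (X',Y',Z',f',g',h') \<Rightarrow>
     a \<in> Hom C X X' \<and> b \<in> Hom C Y Y' \<and> c \<in> Hom C Z Z' \<and>
     cmp C b f = cmp C f' a \<and> cmp C c g = cmp C g' b \<and> cmp C (shm C a) h = cmp C h' c)"

definition preadditive_cat :: "('o,'m) tricat \<Rightarrow> bool" where
  "preadditive_cat C \<longleftrightarrow>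
    (\<forall>X \<in> Ob C. idm C X \<in> Hom C X X) \<and>
    (\<forall>X \<in> Ob C. \<forall>Y \<in> Ob C. \<forall>Z \<in> Ob C. \<forall>f \<in> Hom C X Y. \<forall>g \<in> Hom C Y Z.
        cmp C g f \<in> Hom C X Z) \<and>
    (\<forall>X \<in> Ob C. \<forall>Y \<in> Ob C. \<forall>f \<in> Hom C X Y.
        cmp C f (idm C X) = f \<and> cmp C (idm C Y) f = f) \<and>
    (\<forall>W \<in> Ob C. \<forall>X \<in> Ob C. \<forall>Y \<in> Ob C. \<forall>Z \<in> Ob C.
       \<forall>f \<in> Hom C W X. \<forall>g \<in> Hom C X Y. \<forall>h \<in> Hom C Y Z.
        cmp C h (cmp C g f) = cmp C (cmp C h g) f) \<and>
    (\<forall>X \<in> Ob C. \<forall>Y \<in> Ob C.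
       zm C X Y \<in> Hom C X Y \<and>
       (\<forall>f \<in> Hom C X Y. \<forall>g \<in> Hom C X Y. madd C f g \<in> Hom C X Y) \<and>
       (\<forall>f \<in> Hom C X Y. mneg C f \<in> Hom C X Y) \<and>
       (\<forall>f \<in> Hom C X Y. \<forall>g \<in> Hom C X Y. \<forall>h \<in> Hom C X Y.
          madd C (madd C f g) h = madd C f (madd C g h)) \<and>
       (\<forall>f \<in> Hom C X Y. \<forall>g \<in> Hom C X Y. madd C f g = madd C g f) \<and>
       (\<forall>f \<in> Hom C X Y. madd C f (zm C X Y) = f) \<and>
       (\<forall>f \<in> Hom C X Y. madd C f (mneg C f) = zm C X Y)) \<and>
    (\<forall>X \<in> Ob C. \<forall>Y \<in> Ob C. \<forall>Z \<in> Ob C.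
       (\<forall>f \<in> Hom C X Y. \<forall>g \<in> Hom C Y Z. \<forall>g' \<in> Hom C Y Z.
          cmp C (madd C g g') f = madd C (cmp C g f) (cmp C g' f)) \<and>
       (\<forall>f \<in> Hom C X Y. \<forall>f' \<in> Hom C X Y. \<forall>g \<in> Hom C Y Z.
          cmp C g (madd C f f') = madd C (cmp C g f) (cmp C g f')))"

definition additive_cat :: "('o,'m) tricat \<Rightarrow> bool" where
  "additive_cat C \<longleftrightarrow> preadditive_cat C \<and>
    (\<exists>Z. is_zero_obj C Z) \<and>
    (\<forall>X \<in> Ob C. \<forall>Y \<in> Ob C. \<exists>S. is_dsum C X Y S)"

definition shift_auto :: "('o,'m) tricat \<Rightarrow> bool" where
  "shift_auto C \<longleftrightarrow>
    bij_betw (sh C) (Ob C) (Ob C) \<and>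
    (\<forall>X \<in> Ob C. \<forall>Y \<in> Ob C. bij_betw (shm C) (Hom C X Y) (Hom C (sh C X) (sh C Y))) \<and>
    (\<forall>X \<in> Ob C. shm C (idm C X) = idm C (sh C X)) \<and>
    (\<forall>X \<in> Ob C. \<forall>Y \<in> Ob C. \<forall>Z \<in> Ob C. \<forall>f \<in> Hom C X Y. \<forall>g \<in> Hom C Y Z.
        shm C (cmp C g f) = cmp C (shm C g) (shm C f)) \<and>
    (\<forall>X \<in> Ob C. \<forall>Y \<in> Ob C. \<forall>f \<in> Hom C X Y. \<forall>g \<in> Hom C X Y.
        shm C (madd C f g) = madd C (shm C f) (shm C g))"

definition triangulated :: "('o,'m) tricat \<Rightarrow> bool" where
  "triangulated C \<longleftrightarrow> additive_cat C \<and> shift_auto C \<and>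
    (\<forall>T \<in> Tri C. is_tri_shape C T) \<and>
    \<comment> \<open>TR1: closure under isomorphism of triangles\<close>
    (\<forall>T \<in> Tri C. \<forall>T'. is_tri_shape C T' \<longrightarrow>
       (\<exists>a b c. tri_mor C T T' a b c \<and>
          is_iso C a (fst T) (fst T') \<and> is_iso C b (fst (snd T)) (fst (snd T')) \<and>
          is_iso C c (fst (snd (snd T))) (fst (snd (snd T')))) \<longrightarrow> T' \<in> Tri C) \<and>
    \<comment> \<open>TR1: X --id--> X --> 0 --> X[1] is exact\<close>
    (\<forall>X \<in> Ob C. \<forall>Z. is_zero_obj C Z \<longrightarrow>
       (X, X, Z, idm C X, zm C X Z, zm C Z (sh C X)) \<in> Tri C) \<and>
    \<comment> \<open>TR1: every morphism embeds in an exact triangle\<close>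
    (\<forall>X \<in> Ob C. \<forall>Y \<in> Ob C. \<forall>f \<in> Hom C X Y. \<exists>Z g h. (X, Y, Z, f, g, h) \<in> Tri C) \<and>
    \<comment> \<open>TR2: rotation\<close>
    (\<forall>X Y Z f g h. is_tri_shape C (X, Y, Z, f, g, h) \<longrightarrow>
       ((X, Y, Z, f, g, h) \<in> Tri C \<longleftrightarrow> (Y, Z, sh C X, g, h, mneg C (shm C f)) \<in> Tri C)) \<and>
    \<comment> \<open>TR3: morphism extension\<close>
    (\<forall>T \<in> Tri C. \<forall>T' \<in> Tri C. \<forall>a b.
       (case T of (X,Y,Z,f,g,h) \<Rightarrow> case T' of (X',Y',Z',f',g',h') \<Rightarrow>
          a \<in> Hom C X X' \<and> b \<in> Hom C Y Y' \<and> cmp C b f = cmp C f' a) \<longrightarrow>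
       (\<exists>c. tri_mor C T T' a b c)) \<and>
    \<comment> \<open>TR4: octahedral axiom\<close>
    (\<forall>X Y Z Z' X' Y' f g i i' k k' l l'.
       (X, Y, Z', f, i, i') \<in> Tri C \<longrightarrow> (Y, Z, X', g, k, k') \<in> Tri C \<longrightarrow>
       (X, Z, Y', cmp C g f, l, l') \<in> Tri C \<longrightarrow>
       (\<exists>u v. (Z', Y', X', u, v, cmp C (shm C i) k') \<in> Tri C \<and>
          cmp C u i = cmp C l g \<and> cmp C l' u = i' \<and>
          cmp C v l = k \<and> cmp C k' v = cmp C (shm C f) l'))"

text \<open>Full subcategories are given by their sets of objects.\<close>
definition tri_subcat :: "('o,'m) tricat \<Rightarrow> 'o set \<Rightarrow> bool" where
  "tri_subcat C D \<longleftrightarrow> D \<subseteq> Ob C \<and>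
     (\<forall>X \<in> D. sh C X \<in> D) \<and> (\<forall>X \<in> Ob C. sh C X \<in> D \<longrightarrow> X \<in> D) \<and>
     (\<forall>X \<in> D. \<forall>Y. isomorphic C X Y \<longrightarrow> Y \<in> D) \<and>
     (\<forall>X Y Z f g h. (X, Y, Z, f, g, h) \<in> Tri C \<longrightarrow> X \<in> D \<longrightarrow> Y \<in> D \<longrightarrow> Z \<in> D)"

definition dense_subcat :: "('o,'m) tricat \<Rightarrow> 'o set \<Rightarrow> bool" where
  "dense_subcat C D \<longleftrightarrow> tri_subcat C D \<and>
     (\<forall>U \<in> Ob C. \<exists>V \<in> Ob C. \<exists>S. is_dsum C U V S \<and> S \<in> D)"

inductive is_power :: "('o,'m) tricat \<Rightarrow> 'o \<Rightarrow> nat \<Rightarrow> 'o \<Rightarrow> bool" for C where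
  pw_one: "U \<in> Ob C \<Longrightarrow> is_power C U (Suc 0) U"
| pw_suc: "is_power C U n T \<Longrightarrow> is_dsum C T U S \<Longrightarrow> is_power C U (Suc n) S"

definition radical_subcat :: "('o,'m) tricat \<Rightarrow> 'o set \<Rightarrow> bool" where
  "radical_subcat C D \<longleftrightarrow> tri_subcat C D \<and>
     (\<forall>U \<in> Ob C. (\<exists>n S. n \<ge> 1 \<and> is_power C U n S \<and> S \<in> D) \<longrightarrow> U \<in> D)"

text \<open>G(C)_Q = (free abelian group on iso classes / relations) \<otimes> Q, realised as the
free Q-vector space on the objects (finitely supported functions) modulo the Q-span of
[Y]-[X] for X \<cong> Y and [V]-[U]-[W] for exact triangles U \<rightarrow> V \<rightarrow> W \<rightarrow> U[1].
Elements of G(C)_Q are cosets v + R.\<close>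

definition gen :: "'o \<Rightarrow> ('o \<Rightarrow> rat)" where
  "gen X = (\<lambda>Y. if Y = X then 1 else 0)"

inductive_set qspan :: "('o \<Rightarrow> rat) set \<Rightarrow> ('o \<Rightarrow> rat) set" for S where
  qs_zero: "0 \<in> qspan S"
| qs_gen: "v \<in> S \<Longrightarrow> v \<in> qspan S"
| qs_add: "v \<in> qspan S \<Longrightarrow> w \<in> qspan S \<Longrightarrow> v + w \<in> qspan S"
| qs_smult: "v \<in> qspan S \<Longrightarrow> (\<lambda>x. c * v x) \<in> qspan S"

definition freeQ :: "('o,'m) tricat \<Rightarrow> ('o \<Rightarrow> rat) set" where
  "freeQ C = qspan (gen ` Ob C)"

definition relsQ :: "('o,'m) tricat \<Rightarrow> ('o \<Rightarrow> rat) set" where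
  "relsQ C = qspan ({gen Y - gen X | X Y. isomorphic C X Y} \<union>
                    {gen V - gen U - gen W | U V W f g h. (U, V, W, f, g, h) \<in> Tri C})"

definition gcls :: "('o,'m) tricat \<Rightarrow> ('o \<Rightarrow> rat) \<Rightarrow> ('o \<Rightarrow> rat) set" where
  "gcls C v = {v + r | r. r \<in> relsQ C}"

definition GQ :: "('o,'m) tricat \<Rightarrow> ('o \<Rightarrow> rat) set set" where
  "GQ C = gcls C ` freeQ C"

definition qsubspace :: "('o,'m) tricat \<Rightarrow> ('o \<Rightarrow> rat) set set \<Rightarrow> bool" where
  "qsubspace C H \<longleftrightarrow> H \<subseteq> GQ C \<and> gcls C 0 \<in> H \<and>
     (\<forall>a \<in> freeQ C. \<forall>b \<in> freeQ C. gcls C a \<in> H \<longrightarrow> gcls C b \<in> H \<longrightarrow> gcls C (a + b) \<in> H) \<and>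
     (\<forall>a \<in> freeQ C. \<forall>c. gcls C a \<in> H \<longrightarrow> gcls C (\<lambda>x. c * a x) \<in> H)"

text \<open>Image of delta^D_Q : G(D)_Q \<rightarrow> G(C)_Q, i.e. the Q-span of the classes [X], X \<in> D.\<close>
definition im_delta :: "('o,'m) tricat \<Rightarrow> 'o set \<Rightarrow> ('o \<Rightarrow> rat) set set" where
  "im_delta C D = gcls C ` qspan (gen ` D)"

definition radical_dense :: "('o,'m) tricat \<Rightarrow> 'o set \<Rightarrow> bool" where
  "radical_dense C D \<longleftrightarrow> dense_subcat C D \<and> radical_subcat C D"

definition D_of :: "('o,'m) tricat \<Rightarrow> ('o \<Rightarrow> rat) set set \<Rightarrow> 'o set" where
  "D_of C H = (THE D. radical_dense C D \<and> im_delta C D = H)"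

end

theory Submission
  imports Defs "HOL-Library.Multiset"
begin

text \<open>
  For a \<open>\<rat>\<close>-subspace \<open>H\<close>, the objects whose class lies in \<open>H\<close> form a triangulated subcategory
  \<open>D\<^sub>H\<close>; it is radical because \<open>[X\<^sup>n] = n[X]\<close>, dense because \<open>[X \<oplus> X[1]] = 0\<close>, and its image is
  all of \<open>H\<close> because, as \<open>[X[1]] = -[X]\<close>, every class is a rational multiple of the class of a
  single object.

  Conversely, a dense subcategory \<open>D\<close> contains \<open>X \<oplus> X[1]\<close> for every \<open>X\<close> (octahedral axiom), and for
  every exact triangle \<open>U \<rightarrow> V \<rightarrow> W \<rightarrow> U[1]\<close> it contains \<open>V \<oplus> U[1] \<oplus> W[1]\<close>. Hence every rational
  relation among classes, after clearing denominators, is witnessed by finite multisets \<open>P\<close>, \<open>Q\<close>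

  of objects with \<open>P \<oplus> Q[1] \<in> D\<close>. If \<open>[X]\<close> lies in the image of \<open>D\<close>, this yields \<open>X\<^sup>N \<in> D\<close>

  for some \<open>N \<ge> 1\<close>, so a radical dense \<open>D\<close> equals \<open>D\<^sub>H\<close> for \<open>H\<close> its image.
\<close>

section \<open>Preadditive categories\<close>

locale preadditive_category =
  fixes C :: "('o, 'm) tricat"
  assumes preadditive: "preadditive_cat C"
begin

lemma id_in_Hom [simp]: "X \<in> Ob C \<Longrightarrow> idm C X \<in> Hom C X X"
  using preadditive unfolding preadditive_cat_def by (elim conjE; simp)

lemma comp_in_Hom:
  "\<lbrakk>X \<in> Ob C; Y \<in> Ob C; Z \<in> Ob C; f \<in> Hom C X Y; g \<in> Hom C Y Z\<rbrakk> \<Longrightarrow> cmp C g f \<in> Hom C X Z"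
  using preadditive unfolding preadditive_cat_def by (elim conjE; simp)

lemma comp_id_right: "\<lbrakk>X \<in> Ob C; Y \<in> Ob C; f \<in> Hom C X Y\<rbrakk> \<Longrightarrow> cmp C f (idm C X) = f"
  using preadditive unfolding preadditive_cat_def by (elim conjE; simp)

lemma comp_id_left: "\<lbrakk>X \<in> Ob C; Y \<in> Ob C; f \<in> Hom C X Y\<rbrakk> \<Longrightarrow> cmp C (idm C Y) f = f"
  using preadditive unfolding preadditive_cat_def by (elim conjE; simp)

lemma comp_assoc:
  "\<lbrakk>W \<in> Ob C; X \<in> Ob C; Y \<in> Ob C; Z \<in> Ob C; f \<in> Hom C W X; g \<in> Hom C X Y; h \<in> Hom C Y Z\<rbrakk>
   \<Longrightarrow> cmp C h (cmp C g f) = cmp C (cmp C h g) f"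
  using preadditive unfolding preadditive_cat_def by (elim conjE; simp)

lemma zm_in_Hom [simp]: "\<lbrakk>X \<in> Ob C; Y \<in> Ob C\<rbrakk> \<Longrightarrow> zm C X Y \<in> Hom C X Y"
  using preadditive unfolding preadditive_cat_def by (elim conjE; simp)

lemma madd_in_Hom:
  "\<lbrakk>X \<in> Ob C; Y \<in> Ob C; f \<in> Hom C X Y; g \<in> Hom C X Y\<rbrakk> \<Longrightarrow> madd C f g \<in> Hom C X Y"
  using preadditive unfolding preadditive_cat_def by (elim conjE; simp)

lemma mneg_in_Hom: "\<lbrakk>X \<in> Ob C; Y \<in> Ob C; f \<in> Hom C X Y\<rbrakk> \<Longrightarrow> mneg C f \<in> Hom C X Y"
  using preadditive unfolding preadditive_cat_def by (elim conjE; simp)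

lemma madd_assoc:
  "\<lbrakk>X \<in> Ob C; Y \<in> Ob C; f \<in> Hom C X Y; g \<in> Hom C X Y; h \<in> Hom C X Y\<rbrakk>
   \<Longrightarrow> madd C (madd C f g) h = madd C f (madd C g h)"
  using preadditive unfolding preadditive_cat_def by (elim conjE; simp)

lemma madd_commute:
  "\<lbrakk>X \<in> Ob C; Y \<in> Ob C; f \<in> Hom C X Y; g \<in> Hom C X Y\<rbrakk> \<Longrightarrow> madd C f g = madd C g f"
  using preadditive unfolding preadditive_cat_def by (elim conjE; simp)

lemma madd_zm_right: "\<lbrakk>X \<in> Ob C; Y \<in> Ob C; f \<in> Hom C X Y\<rbrakk> \<Longrightarrow> madd C f (zm C X Y) = f"
  using preadditive unfolding preadditive_cat_def by (elim conjE; simp)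

lemma madd_mneg_right: "\<lbrakk>X \<in> Ob C; Y \<in> Ob C; f \<in> Hom C X Y\<rbrakk> \<Longrightarrow> madd C f (mneg C f) = zm C X Y"
  using preadditive unfolding preadditive_cat_def by (elim conjE; simp)

lemma comp_madd_left:
  "\<lbrakk>X \<in> Ob C; Y \<in> Ob C; Z \<in> Ob C; f \<in> Hom C X Y; g \<in> Hom C Y Z; g' \<in> Hom C Y Z\<rbrakk>
   \<Longrightarrow> cmp C (madd C g g') f = madd C (cmp C g f) (cmp C g' f)"
  using preadditive unfolding preadditive_cat_def by (elim conjE; simp)

lemma comp_madd_right:
  "\<lbrakk>X \<in> Ob C; Y \<in> Ob C; Z \<in> Ob C; f \<in> Hom C X Y; f' \<in> Hom C X Y; g \<in> Hom C Y Z\<rbrakk>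
   \<Longrightarrow> cmp C g (madd C f f') = madd C (cmp C g f) (cmp C g f')"
  using preadditive unfolding preadditive_cat_def by (elim conjE; simp)

lemma madd_zm_left: "\<lbrakk>X \<in> Ob C; Y \<in> Ob C; f \<in> Hom C X Y\<rbrakk> \<Longrightarrow> madd C (zm C X Y) f = f"
  by (metis madd_commute madd_zm_right zm_in_Hom)

lemma zm_if_madd_self:
  assumes "X \<in> Ob C" "Y \<in> Ob C" "x \<in> Hom C X Y" "madd C x x = x"
  shows "x = zm C X Y"
proof -
  have "x = madd C x (madd C x (mneg C x))"
    using assms madd_mneg_right[of X Y x] madd_zm_right[of X Y x] by simp
  also have "\<dots> = madd C (madd C x x) (mneg C x)"
    using assms(1-3) mneg_in_Hom[of X Y x] madd_assoc[of X Y x x "mneg C x"] by simp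
  also have "\<dots> = zm C X Y" using assms madd_mneg_right by simp
  finally show ?thesis .
qed

lemma mneg_unique:
  assumes "X \<in> Ob C" "Y \<in> Ob C" "a \<in> Hom C X Y" "b \<in> Hom C X Y" "madd C a b = zm C X Y"
  shows "b = mneg C a"
proof -
  have n: "mneg C a \<in> Hom C X Y" using mneg_in_Hom assms by blast
  have "b = madd C b (madd C a (mneg C a))"
    using assms madd_mneg_right[of X Y a] madd_zm_right[of X Y b] by simp
  also have "\<dots> = madd C (madd C a b) (mneg C a)"
    using assms n madd_assoc[of X Y b a "mneg C a"] madd_commute[of X Y a b] by simp
  also have "\<dots> = mneg C a" using assms n madd_zm_left[of X Y "mneg C a"] by simp
  finally show ?thesis .
qed

lemma mneg_mneg: "\<lbrakk>X \<in> Ob C; Y \<in> Ob C; f \<in> Hom C X Y\<rbrakk> \<Longrightarrow> mneg C (mneg C f) = f"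
  by (metis mneg_unique madd_mneg_right madd_commute mneg_in_Hom)

lemma mneg_zm: "\<lbrakk>X \<in> Ob C; Y \<in> Ob C\<rbrakk> \<Longrightarrow> mneg C (zm C X Y) = zm C X Y"
  by (metis mneg_unique madd_zm_right zm_in_Hom)

lemma eq_if_madd_mneg_eq_zm:
  assumes "X \<in> Ob C" "Y \<in> Ob C" "a \<in> Hom C X Y" "b \<in> Hom C X Y" "madd C a (mneg C b) = zm C X Y"
  shows "a = b"
  by (metis assms madd_commute mneg_in_Hom mneg_mneg mneg_unique)

lemma comp_zm_right:
  assumes "X \<in> Ob C" "Y \<in> Ob C" "Z \<in> Ob C" "g \<in> Hom C Y Z"
  shows "cmp C g (zm C X Y) = zm C X Z"
proof (rule zm_if_madd_self)
  show "madd C (cmp C g (zm C X Y)) (cmp C g (zm C X Y)) = cmp C g (zm C X Y)"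
    using assms comp_madd_right[of X Y Z "zm C X Y" "zm C X Y" g] madd_zm_right by simp
qed (use assms comp_in_Hom in auto)

lemma comp_zm_left:
  assumes "X \<in> Ob C" "Y \<in> Ob C" "Z \<in> Ob C" "f \<in> Hom C X Y"
  shows "cmp C (zm C Y Z) f = zm C X Z"
proof (rule zm_if_madd_self)
  show "madd C (cmp C (zm C Y Z) f) (cmp C (zm C Y Z) f) = cmp C (zm C Y Z) f"
    using assms comp_madd_left[of X Y Z f "zm C Y Z" "zm C Y Z"] madd_zm_right by simp
qed (use assms comp_in_Hom in auto)

lemma comp_mneg_left:
  assumes "X \<in> Ob C" "Y \<in> Ob C" "Z \<in> Ob C" "f \<in> Hom C X Y" "g \<in> Hom C Y Z"
  shows "cmp C (mneg C g) f = mneg C (cmp C g f)"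
proof (rule mneg_unique)
  have "madd C (cmp C g f) (cmp C (mneg C g) f) = cmp C (madd C g (mneg C g)) f"
    using comp_madd_left assms mneg_in_Hom by metis
  also have "\<dots> = zm C X Z" using assms madd_mneg_right comp_zm_left by simp
  finally show "madd C (cmp C g f) (cmp C (mneg C g) f) = zm C X Z" .
qed (use assms comp_in_Hom mneg_in_Hom in auto)

lemma comp_mneg_right:
  assumes "X \<in> Ob C" "Y \<in> Ob C" "Z \<in> Ob C" "f \<in> Hom C X Y" "g \<in> Hom C Y Z"
  shows "cmp C g (mneg C f) = mneg C (cmp C g f)"
proof (rule mneg_unique)
  have "madd C (cmp C g f) (cmp C g (mneg C f)) = cmp C g (madd C f (mneg C f))"
    using comp_madd_right assms mneg_in_Hom by metis
  also have "\<dots> = zm C X Z" using assms madd_mneg_right comp_zm_right by simp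
  finally show "madd C (cmp C g f) (cmp C g (mneg C f)) = zm C X Z" .
qed (use assms comp_in_Hom mneg_in_Hom in auto)

lemma comp_assoc_inner:
  assumes "A \<in> Ob C" "B \<in> Ob C" "B' \<in> Ob C" "D \<in> Ob C" "E \<in> Ob C"
    and "g \<in> Hom C A B" "b \<in> Hom C B B'" "a \<in> Hom C B' D" "f \<in> Hom C D E"
  shows "cmp C (cmp C f a) (cmp C b g) = cmp C f (cmp C (cmp C a b) g)"
  using assms comp_assoc[of A B' D E "cmp C b g" a f] comp_assoc[of A B B' D g b a] comp_in_Hom
  by metis

lemma is_iso_idm: "X \<in> Ob C \<Longrightarrow> is_iso C (idm C X) X X"
  unfolding is_iso_def using comp_id_left by fastforce

lemma is_zero_obj_in_Ob: "is_zero_obj C Z \<Longrightarrow> Z \<in> Ob C"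
  unfolding is_zero_obj_def by blast

lemma is_zero_obj_Hom_from: "\<lbrakk>is_zero_obj C Z; X \<in> Ob C; f \<in> Hom C Z X\<rbrakk> \<Longrightarrow> f = zm C Z X"
  unfolding is_zero_obj_def by blast

lemma is_zero_obj_Hom_to: "\<lbrakk>is_zero_obj C Z; X \<in> Ob C; f \<in> Hom C X Z\<rbrakk> \<Longrightarrow> f = zm C X Z"
  unfolding is_zero_obj_def by blast

lemma is_zero_obj_idm: "is_zero_obj C Z \<Longrightarrow> idm C Z = zm C Z Z"
  using is_zero_obj_Hom_from is_zero_obj_in_Ob id_in_Hom by blast

lemma is_zero_obj_isomorphic:
  assumes Z: "is_zero_obj C Z" and iso: "isomorphic C Z Z'"
  shows "is_zero_obj C Z'"
proof -
  obtain a b where ab: "Z \<in> Ob C" "Z' \<in> Ob C" "a \<in> Hom C Z Z'" "b \<in> Hom C Z' Z"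
    "cmp C a b = idm C Z'"
    using iso unfolding isomorphic_def is_iso_def by blast
  have from_Z': "f = zm C Z' X" if X: "X \<in> Ob C" and f: "f \<in> Hom C Z' X" for X f
  proof -
    have "f = cmp C (cmp C f a) b"
      using ab X f comp_id_right comp_assoc[of Z' Z Z' X b a f] by simp
    also have "cmp C f a = zm C Z X" using is_zero_obj_Hom_from[OF Z X] comp_in_Hom ab f X by meson
    finally show ?thesis using comp_zm_left ab X by simp
  qed
  have to_Z': "f = zm C X Z'" if X: "X \<in> Ob C" and f: "f \<in> Hom C X Z'" for X f
  proof -
    have "f = cmp C a (cmp C b f)"
      using ab X f comp_id_left comp_assoc[of X Z' Z Z' f b a] by simp
    also have "cmp C b f = zm C X Z" using is_zero_obj_Hom_to[OF Z X] comp_in_Hom ab f X by meson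
    finally show ?thesis using comp_zm_right ab X by simp
  qed
  show ?thesis
    unfolding is_zero_obj_def using ab from_Z' to_Z' zm_in_Hom by blast
qed

lemma is_zero_obj_unique:
  assumes "is_zero_obj C Z" "is_zero_obj C Z'"
  shows "isomorphic C Z Z'"
proof -
  have Ob: "Z \<in> Ob C" "Z' \<in> Ob C" using assms is_zero_obj_in_Ob by auto
  have "cmp C (zm C Z' Z) (zm C Z Z') = idm C Z" "cmp C (zm C Z Z') (zm C Z' Z) = idm C Z'"
    using comp_zm_left Ob is_zero_obj_idm assms by simp_all
  thus ?thesis unfolding isomorphic_def is_iso_def using Ob zm_in_Hom by blast
qed

end

definition dsum_data :: "('o, 'm) tricat \<Rightarrow> 'o \<Rightarrow> 'o \<Rightarrow> 'o \<Rightarrow> 'm \<Rightarrow> 'm \<Rightarrow> 'm \<Rightarrow> 'm \<Rightarrow> bool" where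
  "dsum_data C X Y S p1 p2 i1 i2 \<longleftrightarrow> X \<in> Ob C \<and> Y \<in> Ob C \<and> S \<in> Ob C \<and>
     p1 \<in> Hom C S X \<and> p2 \<in> Hom C S Y \<and> i1 \<in> Hom C X S \<and> i2 \<in> Hom C Y S \<and>
     cmp C p1 i1 = idm C X \<and> cmp C p2 i2 = idm C Y \<and>
     cmp C p1 i2 = zm C Y X \<and> cmp C p2 i1 = zm C X Y \<and>
     madd C (cmp C i1 p1) (cmp C i2 p2) = idm C S"

context preadditive_category
begin

lemma is_dsum_iff_dsum_data: "is_dsum C X Y S \<longleftrightarrow> (\<exists>p1 p2 i1 i2. dsum_data C X Y S p1 p2 i1 i2)"
  unfolding is_dsum_def dsum_data_def by blast

lemma is_dsum_in_Ob: "is_dsum C X Y S \<Longrightarrow> X \<in> Ob C \<and> Y \<in> Ob C \<and> S \<in> Ob C"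
  unfolding is_dsum_def by blast

lemma dsum_data_swap: "dsum_data C X Y S p1 p2 i1 i2 \<Longrightarrow> dsum_data C Y X S p2 p1 i2 i1"
  unfolding dsum_data_def using comp_in_Hom madd_commute
  by (elim conjE) (intro conjI; (assumption | metis))

lemma is_dsum_commute: "is_dsum C X Y S \<Longrightarrow> is_dsum C Y X S"
  unfolding is_dsum_iff_dsum_data by (metis dsum_data_swap)

lemma is_dsum_zero_left:
  assumes Z: "is_zero_obj C Z" and X: "X \<in> Ob C"
  shows "is_dsum C Z X X"
proof -
  have "Z \<in> Ob C" using is_zero_obj_in_Ob Z by blast
  hence "dsum_data C Z X X (zm C X Z) (idm C X) (zm C Z X) (idm C X)"
    unfolding dsum_data_def using X is_zero_obj_idm[OF Z] comp_zm_left[of Z X Z "zm C Z X"]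
      comp_zm_left[of X Z X "zm C X Z"] comp_id_left[of Z X "zm C Z X"]
      comp_id_right[of X Z "zm C X Z"] madd_zm_left[of X X "idm C X"] comp_id_left[of X X "idm C X"]
    by simp
  thus ?thesis using is_dsum_iff_dsum_data by blast
qed

lemma dsum_copair_exists:
  assumes d: "dsum_data C X Y S p1 p2 i1 i2" and W: "W \<in> Ob C"
    and a: "a \<in> Hom C X W" and b: "b \<in> Hom C Y W"
  shows "\<exists>t \<in> Hom C S W. cmp C t i1 = a \<and> cmp C t i2 = b"
proof -
  have s: "X \<in> Ob C" "Y \<in> Ob C" "S \<in> Ob C" "p1 \<in> Hom C S X" "p2 \<in> Hom C S Y"
    "i1 \<in> Hom C X S" "i2 \<in> Hom C Y S" and e: "cmp C p1 i1 = idm C X" "cmp C p2 i2 = idm C Y"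
    "cmp C p1 i2 = zm C Y X" "cmp C p2 i1 = zm C X Y"
    using d unfolding dsum_data_def by auto
  let ?t = "madd C (cmp C a p1) (cmp C b p2)"
  have t: "?t \<in> Hom C S W" using madd_in_Hom comp_in_Hom s W a b by meson
  have "cmp C ?t i1 = madd C (cmp C (cmp C a p1) i1) (cmp C (cmp C b p2) i1)"
    using comp_madd_left[of X S W i1 "cmp C a p1" "cmp C b p2"] comp_in_Hom s W a b by meson
  also have "\<dots> = a"
    using comp_assoc[of X S X W i1 p1 a, symmetric] comp_assoc[of X S Y W i1 p2 b, symmetric]
      e s W a b comp_id_right comp_zm_right madd_zm_right by simp
  finally have 1: "cmp C ?t i1 = a" .
  have "cmp C ?t i2 = madd C (cmp C (cmp C a p1) i2) (cmp C (cmp C b p2) i2)"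
    using comp_madd_left[of Y S W i2 "cmp C a p1" "cmp C b p2"] comp_in_Hom s W a b by meson
  also have "\<dots> = b"
    using comp_assoc[of Y S X W i2 p1 a, symmetric] comp_assoc[of Y S Y W i2 p2 b, symmetric]
      e s W a b comp_id_right comp_zm_right madd_zm_left by simp
  finally show ?thesis using 1 t by blast
qed

lemma dsum_hom_ext:
  assumes d: "dsum_data C X Y S p1 p2 i1 i2" and W: "W \<in> Ob C"
    and t: "t \<in> Hom C S W" and t': "t' \<in> Hom C S W"
    and "cmp C t i1 = cmp C t' i1" "cmp C t i2 = cmp C t' i2"
  shows "t = t'"
proof -
  have s: "X \<in> Ob C" "Y \<in> Ob C" "S \<in> Ob C" "p1 \<in> Hom C S X" "p2 \<in> Hom C S Y"
    "i1 \<in> Hom C X S" "i2 \<in> Hom C Y S" and e: "madd C (cmp C i1 p1) (cmp C i2 p2) = idm C S"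
    using d unfolding dsum_data_def by auto
  have expand: "u = madd C (cmp C (cmp C u i1) p1) (cmp C (cmp C u i2) p2)"
    if u: "u \<in> Hom C S W" for u
  proof -
    have "u = cmp C u (madd C (cmp C i1 p1) (cmp C i2 p2))" using e comp_id_right u s W by simp
    also have "\<dots> = madd C (cmp C u (cmp C i1 p1)) (cmp C u (cmp C i2 p2))"
      using comp_madd_right[of S S W "cmp C i1 p1" "cmp C i2 p2" u] comp_in_Hom s u W by meson
    finally show ?thesis
      using comp_assoc[of S X S W p1 i1 u] comp_assoc[of S Y S W p2 i2 u] s u W by simp
  qed
  show ?thesis using expand[OF t] expand[OF t'] assms(5,6) by metis
qed

lemma is_dsum_unique:
  assumes "is_dsum C X Y S" "is_dsum C X Y S'"
  shows "isomorphic C S S'"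
proof -
  obtain p1 p2 i1 i2 where d: "dsum_data C X Y S p1 p2 i1 i2"
    using assms is_dsum_iff_dsum_data by blast
  obtain q1 q2 j1 j2 where d': "dsum_data C X Y S' q1 q2 j1 j2"
    using assms is_dsum_iff_dsum_data by blast
  have s: "X \<in> Ob C" "Y \<in> Ob C" "S \<in> Ob C" "S' \<in> Ob C" "i1 \<in> Hom C X S" "i2 \<in> Hom C Y S"
      "j1 \<in> Hom C X S'" "j2 \<in> Hom C Y S'" using d d' unfolding dsum_data_def by auto
  obtain f where f: "f \<in> Hom C S S'" "cmp C f i1 = j1" "cmp C f i2 = j2"
    using dsum_copair_exists[OF d s(4) s(7) s(8)] by blast
  obtain g where g: "g \<in> Hom C S' S" "cmp C g j1 = i1" "cmp C g j2 = i2"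
    using dsum_copair_exists[OF d' s(3) s(5) s(6)] by blast
  have "cmp C g f = idm C S"
    by (rule dsum_hom_ext[OF d s(3)])
      (use f g s comp_assoc[of X S S' S i1 f g] comp_assoc[of Y S S' S i2 f g] comp_id_left
        comp_in_Hom in auto)
  moreover have "cmp C f g = idm C S'"
    by (rule dsum_hom_ext[OF d' s(4)])
      (use f g s comp_assoc[of X S' S S' j1 g f] comp_assoc[of Y S' S S' j2 g f] comp_id_left
        comp_in_Hom in auto)
  ultimately show ?thesis unfolding isomorphic_def is_iso_def using f g s by blast
qed

lemma is_dsum_isomorphic_sum:
  assumes D: "is_dsum C X Y S" and iso: "isomorphic C S S'"
  shows "is_dsum C X Y S'"
proof -
  obtain p1 p2 i1 i2 where "dsum_data C X Y S p1 p2 i1 i2"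
    using D is_dsum_iff_dsum_data by blast
  hence s: "X \<in> Ob C" "Y \<in> Ob C" "S \<in> Ob C" "p1 \<in> Hom C S X" "p2 \<in> Hom C S Y"
    "i1 \<in> Hom C X S" "i2 \<in> Hom C Y S" and e: "cmp C p1 i1 = idm C X" "cmp C p2 i2 = idm C Y"
    "cmp C p1 i2 = zm C Y X" "cmp C p2 i1 = zm C X Y" "madd C (cmp C i1 p1) (cmp C i2 p2) = idm C S"
    unfolding dsum_data_def by auto
  obtain f g where f: "S' \<in> Ob C" "f \<in> Hom C S S'" "g \<in> Hom C S' S"
    "cmp C g f = idm C S" "cmp C f g = idm C S'"
    using iso unfolding isomorphic_def is_iso_def by blast
  have pi: "cmp C (cmp C p g) (cmp C f i) = cmp C p i"
    if "U \<in> Ob C" "V \<in> Ob C" "p \<in> Hom C S U" "i \<in> Hom C V S" for U V p i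
    using comp_assoc_inner[of V S S' S U i f g p] that f s comp_id_left by simp
  have ip: "cmp C (cmp C f i) (cmp C p g) = cmp C f (cmp C (cmp C i p) g)"
    if "U \<in> Ob C" "p \<in> Hom C S U" "i \<in> Hom C U S" for U p i
    using comp_assoc_inner[of S' S U S S' g p i f] that f s by simp
  have ip_in: "cmp C i1 p1 \<in> Hom C S S" "cmp C i2 p2 \<in> Hom C S S" using comp_in_Hom s by blast+
  have "madd C (cmp C (cmp C f i1) (cmp C p1 g)) (cmp C (cmp C f i2) (cmp C p2 g))
      = madd C (cmp C f (cmp C (cmp C i1 p1) g)) (cmp C f (cmp C (cmp C i2 p2) g))"
    using ip s by simp
  also have "\<dots> = cmp C f (madd C (cmp C (cmp C i1 p1) g) (cmp C (cmp C i2 p2) g))"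
    using comp_madd_right[of S' S S' "cmp C (cmp C i1 p1) g" "cmp C (cmp C i2 p2) g" f]
      comp_in_Hom ip_in f s by metis
  also have "\<dots> = cmp C f (cmp C (madd C (cmp C i1 p1) (cmp C i2 p2)) g)"
    using comp_madd_left[of S' S S g "cmp C i1 p1" "cmp C i2 p2"] ip_in f s by simp
  also have "\<dots> = idm C S'" using e f s comp_id_left by simp
  finally have sum: "madd C (cmp C (cmp C f i1) (cmp C p1 g)) (cmp C (cmp C f i2) (cmp C p2 g))
      = idm C S'" .
  have "dsum_data C X Y S' (cmp C p1 g) (cmp C p2 g) (cmp C f i1) (cmp C f i2)"
    unfolding dsum_data_def using s f e sum comp_in_Hom
      pi[of X X p1 i1] pi[of Y Y p2 i2] pi[of X Y p1 i2] pi[of Y X p2 i1] by simp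
  thus ?thesis using is_dsum_iff_dsum_data by blast
qed

lemma is_dsum_isomorphic_left:
  assumes D: "is_dsum C X Y S" and iso: "isomorphic C X X'"
  shows "is_dsum C X' Y S"
proof -
  obtain p1 p2 i1 i2 where "dsum_data C X Y S p1 p2 i1 i2"
    using D is_dsum_iff_dsum_data by blast
  hence s: "X \<in> Ob C" "Y \<in> Ob C" "S \<in> Ob C" "p1 \<in> Hom C S X" "p2 \<in> Hom C S Y"
    "i1 \<in> Hom C X S" "i2 \<in> Hom C Y S" and e: "cmp C p1 i1 = idm C X" "cmp C p2 i2 = idm C Y"
    "cmp C p1 i2 = zm C Y X" "cmp C p2 i1 = zm C X Y" "madd C (cmp C i1 p1) (cmp C i2 p2) = idm C S"
    unfolding dsum_data_def by auto
  obtain f g where f: "X' \<in> Ob C" "f \<in> Hom C X X'" "g \<in> Hom C X' X"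
    "cmp C g f = idm C X" "cmp C f g = idm C X'"
    using iso unfolding isomorphic_def is_iso_def by blast
  have "cmp C (cmp C f p1) (cmp C i1 g) = idm C X'"
    using comp_assoc_inner[of X' X S X X' g i1 p1 f] f s e comp_id_left by simp
  moreover have "cmp C p2 (cmp C i1 g) = zm C X' Y"
    using comp_assoc[of X' X S Y g i1 p2] f s e comp_zm_left by simp
  moreover have "cmp C (cmp C f p1) i2 = zm C Y X'"
    using comp_assoc[of Y S X X' i2 p1 f] f s e comp_zm_right by simp
  moreover have "cmp C (cmp C i1 g) (cmp C f p1) = cmp C i1 p1"
    using comp_assoc_inner[of S X X' X S p1 f g i1] f s e comp_id_left by simp
  ultimately have "dsum_data C X' Y S (cmp C f p1) p2 (cmp C i1 g) i2"
    unfolding dsum_data_def using s f e comp_in_Hom by simp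
  thus ?thesis using is_dsum_iff_dsum_data by blast
qed

lemma is_dsum_isomorphic_right: "is_dsum C X Y S \<Longrightarrow> isomorphic C Y Y' \<Longrightarrow> is_dsum C X Y' S"
  using is_dsum_commute is_dsum_isomorphic_left by blast

end

section \<open>Triangulated categories\<close>

locale triangulated_category =
  fixes C :: "('o, 'm) tricat"
  assumes triangulated: "triangulated C"

sublocale triangulated_category \<subseteq> preadditive_category
  using triangulated unfolding triangulated_def additive_cat_def by unfold_locales (elim conjE)

context triangulated_category
begin

lemma additive: "additive_cat C"
  using triangulated unfolding triangulated_def by (elim conjE) assumption

lemma shift_auto: "shift_auto C"
  using triangulated unfolding triangulated_def by (elim conjE) assumption

lemma Tri_shape: "\<forall>T \<in> Tri C. is_tri_shape C T"
  using triangulated unfolding triangulated_def by (elim conjE) assumption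

lemma Tri_iso_closed: "\<forall>T \<in> Tri C. \<forall>T'. is_tri_shape C T' \<longrightarrow>
       (\<exists>a b c. tri_mor C T T' a b c \<and>
          is_iso C a (fst T) (fst T') \<and> is_iso C b (fst (snd T)) (fst (snd T')) \<and>
          is_iso C c (fst (snd (snd T))) (fst (snd (snd T')))) \<longrightarrow> T' \<in> Tri C"
  using triangulated unfolding triangulated_def by (elim conjE) assumption

lemma Tri_idm: "\<forall>X \<in> Ob C. \<forall>Z. is_zero_obj C Z \<longrightarrow>
       (X, X, Z, idm C X, zm C X Z, zm C Z (sh C X)) \<in> Tri C"
  using triangulated unfolding triangulated_def by (elim conjE) assumption

lemma Tri_exists: "\<forall>X \<in> Ob C. \<forall>Y \<in> Ob C. \<forall>f \<in> Hom C X Y. \<exists>Z g h. (X, Y, Z, f, g, h) \<in> Tri C"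
  using triangulated unfolding triangulated_def by (elim conjE) assumption

lemma Tri_rotate: "\<forall>X Y Z f g h. is_tri_shape C (X, Y, Z, f, g, h) \<longrightarrow>
       ((X, Y, Z, f, g, h) \<in> Tri C \<longleftrightarrow> (Y, Z, sh C X, g, h, mneg C (shm C f)) \<in> Tri C)"
  using triangulated unfolding triangulated_def by (elim conjE) assumption

lemma Tri_morphism: "\<forall>T \<in> Tri C. \<forall>T' \<in> Tri C. \<forall>a b.
       (case T of (X,Y,Z,f,g,h) \<Rightarrow> case T' of (X',Y',Z',f',g',h') \<Rightarrow>
          a \<in> Hom C X X' \<and> b \<in> Hom C Y Y' \<and> cmp C b f = cmp C f' a) \<longrightarrow>
       (\<exists>c. tri_mor C T T' a b c)"
  using triangulated unfolding triangulated_def by (elim conjE) assumption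

lemma Tri_octahedral: "\<forall>X Y Z Z' X' Y' f g i i' k k' l l'.
       (X, Y, Z', f, i, i') \<in> Tri C \<longrightarrow> (Y, Z, X', g, k, k') \<in> Tri C \<longrightarrow>
       (X, Z, Y', cmp C g f, l, l') \<in> Tri C \<longrightarrow>
       (\<exists>u v. (Z', Y', X', u, v, cmp C (shm C i) k') \<in> Tri C \<and>
          cmp C u i = cmp C l g \<and> cmp C l' u = i' \<and>
          cmp C v l = k \<and> cmp C k' v = cmp C (shm C f) l')"
  using triangulated unfolding triangulated_def by (elim conjE) assumption

lemma zero_obj_exists: "\<exists>Z. is_zero_obj C Z"
  using additive unfolding additive_cat_def by blast

lemma is_dsum_exists: "\<lbrakk>X \<in> Ob C; Y \<in> Ob C\<rbrakk> \<Longrightarrow> \<exists>S. is_dsum C X Y S"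
  using additive unfolding additive_cat_def by blast

lemma sh_in_Ob [simp]: "X \<in> Ob C \<Longrightarrow> sh C X \<in> Ob C"
  using shift_auto unfolding shift_auto_def bij_betw_def by blast

lemma sh_surj: "Y \<in> Ob C \<Longrightarrow> \<exists>X\<in>Ob C. sh C X = Y"
  using shift_auto unfolding shift_auto_def bij_betw_def by (metis imageE)

lemma shm_in_Hom: "\<lbrakk>X \<in> Ob C; Y \<in> Ob C; f \<in> Hom C X Y\<rbrakk> \<Longrightarrow> shm C f \<in> Hom C (sh C X) (sh C Y)"
  using shift_auto unfolding shift_auto_def bij_betw_def by blast

lemma shm_surj:
  "\<lbrakk>X \<in> Ob C; Y \<in> Ob C; g \<in> Hom C (sh C X) (sh C Y)\<rbrakk> \<Longrightarrow> \<exists>f\<in>Hom C X Y. shm C f = g"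
  using shift_auto unfolding shift_auto_def bij_betw_def by (metis imageE)

lemma shm_inj:
  "\<lbrakk>X \<in> Ob C; Y \<in> Ob C; f \<in> Hom C X Y; f' \<in> Hom C X Y; shm C f = shm C f'\<rbrakk> \<Longrightarrow> f = f'"
  using shift_auto unfolding shift_auto_def bij_betw_def inj_on_def by (elim conjE; blast)

lemma shm_idm: "X \<in> Ob C \<Longrightarrow> shm C (idm C X) = idm C (sh C X)"
  using shift_auto unfolding shift_auto_def by blast

lemma shm_comp:
  "\<lbrakk>X \<in> Ob C; Y \<in> Ob C; Z \<in> Ob C; f \<in> Hom C X Y; g \<in> Hom C Y Z\<rbrakk>
   \<Longrightarrow> shm C (cmp C g f) = cmp C (shm C g) (shm C f)"
  using shift_auto unfolding shift_auto_def by (elim conjE; simp)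

lemma shm_madd:
  "\<lbrakk>X \<in> Ob C; Y \<in> Ob C; f \<in> Hom C X Y; g \<in> Hom C X Y\<rbrakk>
   \<Longrightarrow> shm C (madd C f g) = madd C (shm C f) (shm C g)"
  using shift_auto unfolding shift_auto_def by (elim conjE; simp)

lemma shm_zm: "\<lbrakk>X \<in> Ob C; Y \<in> Ob C\<rbrakk> \<Longrightarrow> shm C (zm C X Y) = zm C (sh C X) (sh C Y)"
  using zm_if_madd_self[of "sh C X" "sh C Y" "shm C (zm C X Y)"] shm_in_Hom[of X Y "zm C X Y"]
    shm_madd[of X Y "zm C X Y" "zm C X Y"] madd_zm_right[of X Y "zm C X Y"] by simp

lemma tri_shape:
  "(X, Y, Z, f, g, h) \<in> Tri C \<Longrightarrow>
   X \<in> Ob C \<and> Y \<in> Ob C \<and> Z \<in> Ob C \<and> f \<in> Hom C X Y \<and> g \<in> Hom C Y Z \<and> h \<in> Hom C Z (sh C X)"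
  using Tri_shape unfolding is_tri_shape_def by fastforce

lemma tri_isomorphic:
  assumes "T \<in> Tri C" "is_tri_shape C T'" "tri_mor C T T' a b c"
    "is_iso C a (fst T) (fst T')" "is_iso C b (fst (snd T)) (fst (snd T'))"
    "is_iso C c (fst (snd (snd T))) (fst (snd (snd T')))"
  shows "T' \<in> Tri C"
  using Tri_iso_closed assms by blast

lemma tri_idm: "\<lbrakk>X \<in> Ob C; is_zero_obj C Z\<rbrakk> \<Longrightarrow> (X, X, Z, idm C X, zm C X Z, zm C Z (sh C X)) \<in> Tri C"
  using Tri_idm by blast

lemma tri_exists: "\<lbrakk>X \<in> Ob C; Y \<in> Ob C; f \<in> Hom C X Y\<rbrakk> \<Longrightarrow> \<exists>Z g h. (X, Y, Z, f, g, h) \<in> Tri C"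
  using Tri_exists by blast

lemma tri_rotate_iff:
  "is_tri_shape C (X, Y, Z, f, g, h) \<Longrightarrow>
   (X, Y, Z, f, g, h) \<in> Tri C \<longleftrightarrow> (Y, Z, sh C X, g, h, mneg C (shm C f)) \<in> Tri C"
  using Tri_rotate by blast

lemma tri_rotate:
  assumes "(X, Y, Z, f, g, h) \<in> Tri C"
  shows "(Y, Z, sh C X, g, h, mneg C (shm C f)) \<in> Tri C"
proof -
  have "is_tri_shape C (X, Y, Z, f, g, h)"
    using tri_shape[OF assms] unfolding is_tri_shape_def by simp
  thus ?thesis using tri_rotate_iff assms by blast
qed

lemma tri_morphism_exists:
  assumes "(X, Y, Z, f, g, h) \<in> Tri C" "(X', Y', Z', f', g', h') \<in> Tri C"
    "a \<in> Hom C X X'" "b \<in> Hom C Y Y'" "cmp C b f = cmp C f' a"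
  shows "\<exists>c \<in> Hom C Z Z'. cmp C c g = cmp C g' b \<and> cmp C (shm C a) h = cmp C h' c"
proof -
  have "\<exists>c. tri_mor C (X, Y, Z, f, g, h) (X', Y', Z', f', g', h') a b c"
    using Tri_morphism assms by fastforce
  thus ?thesis unfolding tri_mor_def by auto
qed

lemma octahedral:
  "\<lbrakk>(X, Y, Z', f, i, i') \<in> Tri C; (Y, Z, X', g, k, k') \<in> Tri C;
    (X, Z, Y', cmp C g f, l, l') \<in> Tri C\<rbrakk>
   \<Longrightarrow> \<exists>u v. (Z', Y', X', u, v, cmp C (shm C i) k') \<in> Tri C \<and>
          cmp C u i = cmp C l g \<and> cmp C l' u = i' \<and>
          cmp C v l = k \<and> cmp C k' v = cmp C (shm C f) l'"
  using Tri_octahedral by blast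


lemma tri_unrotate:
  assumes "(A, B, D, a, b, c) \<in> Tri C"
  shows "\<exists>X f. X \<in> Ob C \<and> sh C X = D \<and> f \<in> Hom C X A \<and> mneg C (shm C f) = c \<and>
    (X, A, B, f, a, b) \<in> Tri C"
proof -
  have s: "A \<in> Ob C" "B \<in> Ob C" "D \<in> Ob C" "a \<in> Hom C A B" "b \<in> Hom C B D" "c \<in> Hom C D (sh C A)"
    using tri_shape[OF assms] by auto
  obtain X where X: "X \<in> Ob C" "sh C X = D" using sh_surj s by blast
  have "mneg C c \<in> Hom C (sh C X) (sh C A)" using mneg_in_Hom s X by simp
  then obtain f where f: "f \<in> Hom C X A" "shm C f = mneg C c" using shm_surj X s by blast
  have fc: "mneg C (shm C f) = c" using f(2) mneg_mneg[of D "sh C A" c] s X by simp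
  have "is_tri_shape C (X, A, B, f, a, b)" unfolding is_tri_shape_def using X s f by simp
  hence "(X, A, B, f, a, b) \<in> Tri C" using tri_rotate_iff[THEN iffD2] assms fc X by simp
  thus ?thesis using X f fc by blast
qed

lemma tri_comp_zm:
  assumes T: "(X, Y, Z, f, g, h) \<in> Tri C"
  shows "cmp C g f = zm C X Z"
proof -
  have s: "X \<in> Ob C" "Y \<in> Ob C" "Z \<in> Ob C" "f \<in> Hom C X Y"
    using tri_shape[OF T] by auto
  obtain Z0 where Z0: "is_zero_obj C Z0" using zero_obj_exists by blast
  have T0: "(X, X, Z0, idm C X, zm C X Z0, zm C Z0 (sh C X)) \<in> Tri C" using tri_idm s Z0 by blast
  obtain c where c: "c \<in> Hom C Z0 Z" "cmp C c (zm C X Z0) = cmp C g f"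
    using tri_morphism_exists[OF T0 T, of "idm C X" f] s by auto
  thus ?thesis using comp_zm_right[of X Z0 Z c] s is_zero_obj_in_Ob[OF Z0] by simp
qed

lemma tri_shm_comp_zm:
  assumes T: "(X, Y, Z, f, g, h) \<in> Tri C"
  shows "cmp C (shm C f) h = zm C Z (sh C Y)"
proof -
  have s: "X \<in> Ob C" "Y \<in> Ob C" "Z \<in> Ob C" "f \<in> Hom C X Y" "h \<in> Hom C Z (sh C X)"
    using tri_shape[OF T] by auto
  have "cmp C (mneg C (shm C f)) h = zm C Z (sh C Y)"
    using tri_comp_zm[OF tri_rotate[OF tri_rotate[OF T]]] .
  hence "mneg C (cmp C (shm C f) h) = zm C Z (sh C Y)"
    using comp_mneg_left[of Z "sh C X" "sh C Y" h "shm C f"] s shm_in_Hom by simp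
  hence "mneg C (mneg C (cmp C (shm C f) h)) = zm C Z (sh C Y)" using mneg_zm s by simp
  thus ?thesis using mneg_mneg s comp_in_Hom shm_in_Hom sh_in_Ob by metis
qed

text \<open>Lifting along \<open>f\<close> and extending along \<open>g\<close> both come from a morphism of triangles with
  source (resp. target) a rotation of the trivial triangle \<open>W \<rightarrow> W \<rightarrow> 0 \<rightarrow> W[1]\<close>.\<close>

lemma tri_lift:
  assumes T: "(X, Y, Z, f, g, h) \<in> Tri C" and W: "W \<in> Ob C" and u: "u \<in> Hom C W Y"
    and gu: "cmp C g u = zm C W Z"
  shows "\<exists>a\<in>Hom C W X. cmp C f a = u"
proof -
  have s: "X \<in> Ob C" "Y \<in> Ob C" "Z \<in> Ob C" "f \<in> Hom C X Y"
    using tri_shape[OF T] by auto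
  obtain Z0 where Z0: "is_zero_obj C Z0" using zero_obj_exists by blast
  have Z0o: "Z0 \<in> Ob C" using is_zero_obj_in_Ob Z0 by blast
  have T1: "(W, Z0, sh C W, zm C W Z0, zm C Z0 (sh C W), mneg C (shm C (idm C W))) \<in> Tri C"
    using tri_rotate[OF tri_idm[OF W Z0]] .
  have cond: "cmp C (zm C Z0 Z) (zm C W Z0) = cmp C g u"
    using gu comp_zm_left[of W Z0 Z "zm C W Z0"] W Z0o s by simp
  obtain c where c: "c \<in> Hom C (sh C W) (sh C X)"
     "cmp C (shm C u) (mneg C (shm C (idm C W))) = cmp C (mneg C (shm C f)) c"
    using tri_morphism_exists[OF T1 tri_rotate[OF T] u _ cond] s Z0o by auto
  have sf: "shm C f \<in> Hom C (sh C X) (sh C Y)" using shm_in_Hom s by blast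
  have su: "shm C u \<in> Hom C (sh C W) (sh C Y)" using shm_in_Hom s u W by blast
  have "cmp C (shm C u) (mneg C (shm C (idm C W))) = mneg C (shm C u)"
    using shm_idm[OF W] comp_mneg_right[of "sh C W" "sh C W" "sh C Y" "idm C (sh C W)" "shm C u"]
      su W s comp_id_right[of "sh C W" "sh C Y" "shm C u"] by simp
  moreover have "cmp C (mneg C (shm C f)) c = mneg C (cmp C (shm C f) c)"
    using comp_mneg_left[of "sh C W" "sh C X" "sh C Y" c "shm C f"] c sf W s by simp
  ultimately have "mneg C (shm C u) = mneg C (cmp C (shm C f) c)" using c by simp
  hence "shm C u = cmp C (shm C f) c" using mneg_mneg su sf c comp_in_Hom sh_in_Ob W s by metis
  moreover obtain a where a: "a \<in> Hom C W X" "shm C a = c" using shm_surj W s c by blast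
  ultimately have "shm C u = shm C (cmp C f a)" using shm_comp[of W X Y a f] W s by simp
  hence "u = cmp C f a" using shm_inj[of W Y u "cmp C f a"] u a comp_in_Hom W s by blast
  thus ?thesis using a by blast
qed

lemma tri_extend:
  assumes T: "(X, Y, Z, f, g, h) \<in> Tri C" and W: "W \<in> Ob C" and u: "u \<in> Hom C Y W"
    and uf: "cmp C u f = zm C X W"
  shows "\<exists>c\<in>Hom C Z W. cmp C c g = u"
proof -
  have s: "X \<in> Ob C" "Y \<in> Ob C" "f \<in> Hom C X Y"
    using tri_shape[OF T] by auto
  obtain Z0 where Z0: "is_zero_obj C Z0" using zero_obj_exists by blast
  have Z0o: "Z0 \<in> Ob C" using is_zero_obj_in_Ob Z0 by blast
  obtain W' where W': "W' \<in> Ob C" "sh C W' = W" using sh_surj W by blast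
  have "mneg C (shm C (zm C W' Z0)) = zm C W (sh C Z0)"
    using shm_zm[of W' Z0] W' Z0o mneg_zm[of W "sh C Z0"] W by simp
  hence T1: "(Z0, W, W, zm C Z0 W, mneg C (idm C W), zm C W (sh C Z0)) \<in> Tri C"
    using tri_rotate[OF tri_rotate[OF tri_idm[OF W'(1) Z0]]] shm_idm[OF W'(1)] W' by simp
  have nu: "mneg C u \<in> Hom C Y W" using mneg_in_Hom u s W by blast
  have cond: "cmp C (mneg C u) f = cmp C (zm C Z0 W) (zm C X Z0)"
    using comp_mneg_left[of X Y W f u] uf mneg_zm comp_zm_left[of X Z0 W "zm C X Z0"] s W Z0o u
      by simp
  obtain c where c: "c \<in> Hom C Z W" "cmp C c g = cmp C (mneg C (idm C W)) (mneg C u)"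
    using tri_morphism_exists[OF T T1 _ nu cond] s Z0o by auto
  have "cmp C (mneg C (idm C W)) (mneg C u) = u"
    using comp_mneg_left[of Y W W "mneg C u" "idm C W"] comp_id_left[of Y W "mneg C u"]
      mneg_mneg[of Y W u] nu u s W by simp
  thus ?thesis using c by auto
qed

lemma tri_zm_mono:
  assumes T: "(X, Y, Z, f, g, zm C Z (sh C X)) \<in> Tri C" and W: "W \<in> Ob C"
    and x: "x \<in> Hom C W X" and y: "y \<in> Hom C W X" and e: "cmp C f x = cmp C f y"
  shows "x = y"
proof -
  have s: "X \<in> Ob C" "Y \<in> Ob C" "Z \<in> Ob C" "f \<in> Hom C X Y"
    using tri_shape[OF T] by auto
  obtain X0 f0 where U: "X0 \<in> Ob C" "sh C X0 = Z" "f0 \<in> Hom C X0 X"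
    "mneg C (shm C f0) = zm C Z (sh C X)" "(X0, X, Y, f0, f, g) \<in> Tri C"
    using tri_unrotate[OF T] by blast
  have "shm C f0 \<in> Hom C Z (sh C X)" using shm_in_Hom[OF U(1) s(1) U(3)] U(2) by simp
  hence "shm C f0 = mneg C (mneg C (shm C f0))" using mneg_mneg[of Z "sh C X" "shm C f0"] s by simp
  hence "shm C f0 = zm C Z (sh C X)" using U(4) mneg_zm[of Z "sh C X"] s by simp
  hence "shm C f0 = shm C (zm C X0 X)" using shm_zm[OF U(1) s(1)] U(2) by simp
  hence f0: "f0 = zm C X0 X" using shm_inj[OF U(1) s(1) U(3)] U(1) s by simp
  let ?d = "madd C x (mneg C y)"
  have d: "?d \<in> Hom C W X" using madd_in_Hom mneg_in_Hom W s x y by simp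
  have "cmp C f ?d = madd C (cmp C f x) (cmp C f (mneg C y))"
    using comp_madd_right[of W X Y x "mneg C y" f] W s x y mneg_in_Hom by simp
  also have "\<dots> = zm C W Y"
    using comp_mneg_right[of W X Y y f] madd_mneg_right comp_in_Hom W s y e by simp
  finally obtain a where a: "a \<in> Hom C W X0" "cmp C f0 a = ?d" using tri_lift[OF U(5) W d] by blast
  hence "?d = zm C W X" using f0 comp_zm_left[of W X0 X a] W U s by simp
  thus ?thesis using eq_if_madd_mneg_eq_zm W s x y by blast
qed

lemma tri_zm_epi:
  assumes T: "(X, Y, Z, f, g, zm C Z (sh C X)) \<in> Tri C" and W: "W \<in> Ob C"
    and x: "x \<in> Hom C Z W" and y: "y \<in> Hom C Z W" and e: "cmp C x g = cmp C y g"
  shows "x = y"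
proof -
  have s: "X \<in> Ob C" "Y \<in> Ob C" "Z \<in> Ob C" "g \<in> Hom C Y Z"
    using tri_shape[OF T] by auto
  let ?d = "madd C x (mneg C y)"
  have d: "?d \<in> Hom C Z W" using madd_in_Hom mneg_in_Hom W s x y by simp
  have "cmp C ?d g = madd C (cmp C x g) (cmp C (mneg C y) g)"
    using comp_madd_left[of Y Z W g x "mneg C y"] W s x y mneg_in_Hom by simp
  also have "\<dots> = zm C Y W"
    using comp_mneg_left[of Y Z W g y] madd_mneg_right comp_in_Hom W s y e by simp
  finally obtain a where "a \<in> Hom C (sh C X) W" "cmp C a (zm C Z (sh C X)) = ?d"
    using tri_extend[OF tri_rotate[OF T] W d] by blast
  hence "?d = zm C Z W" using comp_zm_right W s by simp
  thus ?thesis using eq_if_madd_mneg_eq_zm W s x y by blast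
qed

lemma tri_zm_section:
  assumes T: "(X, Y, Z, f, g, zm C Z (sh C X)) \<in> Tri C"
  shows "\<exists>t \<in> Hom C Z Y. cmp C g t = idm C Z"
proof -
  have s: "X \<in> Ob C" "Z \<in> Ob C" using tri_shape[OF T] by auto
  have "cmp C (zm C Z (sh C X)) (idm C Z) = zm C Z (sh C X)"
    using comp_id_right[of Z "sh C X" "zm C Z (sh C X)"] s by simp
  thus ?thesis using tri_lift[OF tri_rotate[OF T] s(2) id_in_Hom[OF s(2)]] by blast
qed

text \<open>A triangle with vanishing connecting morphism splits: with a section \<open>t\<close> of \<open>g\<close>, the
  idempotent \<open>1 - t g\<close> factors as \<open>f r\<close>, and \<open>r\<close> is a retraction of \<open>f\<close>.\<close>

lemma is_dsum_if_tri_zm: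
  assumes T: "(X, Y, Z, f, g, zm C Z (sh C X)) \<in> Tri C"
  shows "is_dsum C X Z Y"
proof -
  have s: "X \<in> Ob C" "Y \<in> Ob C" "Z \<in> Ob C" "f \<in> Hom C X Y" "g \<in> Hom C Y Z"
    using tri_shape[OF T] by auto
  have gf: "cmp C g f = zm C X Z" using tri_comp_zm[OF T] .
  obtain t where t: "t \<in> Hom C Z Y" "cmp C g t = idm C Z" using tri_zm_section[OF T] by blast
  have tg: "cmp C t g \<in> Hom C Y Y" using comp_in_Hom s t by blast
  define e where "e = madd C (idm C Y) (mneg C (cmp C t g))"
  have e: "e \<in> Hom C Y Y" unfolding e_def using madd_in_Hom mneg_in_Hom tg s by simp
  have e_comp: "cmp C e x = madd C x (mneg C (cmp C t (cmp C g x)))"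
    if W: "W \<in> Ob C" and x: "x \<in> Hom C W Y" for W x
    unfolding e_def
    using comp_madd_left[of W Y Y x "idm C Y" "mneg C (cmp C t g)"] comp_id_left
      comp_mneg_left[of W Y Y x "cmp C t g"] comp_assoc[of W Y Z Y x g t] s t tg mneg_in_Hom W x
    by simp
  have "cmp C g e = madd C g (mneg C g)"
    unfolding e_def
    using comp_madd_right[of Y Y Z "idm C Y" "mneg C (cmp C t g)" g]
      comp_mneg_right[of Y Y Z "cmp C t g" g] comp_assoc[of Y Z Y Z g t g]
      s t tg mneg_in_Hom comp_id_left comp_id_right by simp
  also have "\<dots> = zm C Y Z" using madd_mneg_right s by simp
  finally obtain r where r: "r \<in> Hom C Y X" "cmp C f r = e" using tri_lift[OF T s(2) e] by blast
  have rf: "cmp C r f = idm C X"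
  proof (rule tri_zm_mono[OF T s(1)])
    have "cmp C f (cmp C r f) = cmp C e f" using comp_assoc[of X Y X Y f r f] s r by simp
    also have "\<dots> = f" using e_comp[OF s(1,4)] gf comp_zm_right mneg_zm madd_zm_right s t by simp
    finally show "cmp C f (cmp C r f) = cmp C f (idm C X)" using comp_id_right s by simp
  qed (use comp_in_Hom s r in auto)
  have rt: "cmp C r t = zm C Z X"
  proof (rule tri_zm_mono[OF T s(3)])
    have "cmp C f (cmp C r t) = cmp C e t" using comp_assoc[of Z Y X Y t r f] s r t by simp
    also have "\<dots> = zm C Z Y" using e_comp[OF s(3) t(1)] t comp_id_right madd_mneg_right s by simp
    finally show "cmp C f (cmp C r t) = cmp C f (zm C Z X)" using comp_zm_right s by simp
  qed (use comp_in_Hom s r t in auto)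
  have "madd C (cmp C f r) (cmp C t g) = idm C Y"
    using r e_def madd_assoc[of Y Y "idm C Y" "mneg C (cmp C t g)" "cmp C t g"] s tg mneg_in_Hom
      madd_mneg_right[of Y Y "cmp C t g"] madd_commute[of Y Y "mneg C (cmp C t g)" "cmp C t g"]
      madd_zm_right by simp
  thus ?thesis unfolding is_dsum_def using s r t rf rt gf by blast
qed

lemma octahedral_dsum:
  assumes "(X, Y, Z', f, i, i') \<in> Tri C" "(Y, Z, X', g, k, k') \<in> Tri C"
    "(X, Z, Y', cmp C g f, l, l') \<in> Tri C" "cmp C (shm C i) k' = zm C X' (sh C Z')"
  shows "is_dsum C Z' X' Y'"
proof -
  obtain u v where "(Z', Y', X', u, v, cmp C (shm C i) k') \<in> Tri C"
    using octahedral[OF assms(1-3)] by blast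
  thus ?thesis using is_dsum_if_tri_zm assms(4) by simp
qed

lemma tri_zm_if_split_mono:
  assumes T: "(X, Y, Z, f, g, h) \<in> Tri C" and p: "p \<in> Hom C Y X" "cmp C p f = idm C X"
  shows "h = zm C Z (sh C X)"
proof -
  have s: "X \<in> Ob C" "Y \<in> Ob C" "Z \<in> Ob C" "f \<in> Hom C X Y" "h \<in> Hom C Z (sh C X)"
    using tri_shape[OF T] by auto
  have "cmp C (shm C p) (cmp C (shm C f) h) = zm C Z (sh C X)"
    using tri_shm_comp_zm[OF T] comp_zm_right shm_in_Hom s p by simp
  moreover have "cmp C (shm C p) (shm C f) = idm C (sh C X)"
    using shm_comp[of X Y X f p] p shm_idm s by simp
  ultimately show ?thesis
    using comp_assoc[of Z "sh C X" "sh C Y" "sh C X" h "shm C f" "shm C p"] comp_id_left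
      shm_in_Hom s p
    by simp
qed

text \<open>The cone of the split inclusion \<open>i1\<close> is identified with \<open>Y\<close> by the comparison map \<open>c\<close>
  with \<open>c g = p2\<close>, whose inverse is \<open>g i2\<close>.\<close>

lemma tri_of_dsum_data:
  assumes D: "dsum_data C X Y S p1 p2 i1 i2"
  shows "(X, S, Y, i1, p2, zm C Y (sh C X)) \<in> Tri C"
proof -
  have s: "X \<in> Ob C" "Y \<in> Ob C" "S \<in> Ob C" "p1 \<in> Hom C S X" "p2 \<in> Hom C S Y"
    "i1 \<in> Hom C X S" "i2 \<in> Hom C Y S" and e: "cmp C p1 i1 = idm C X" "cmp C p2 i2 = idm C Y"
    "cmp C p2 i1 = zm C X Y" "madd C (cmp C i1 p1) (cmp C i2 p2) = idm C S"
    using D unfolding dsum_data_def by auto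
  obtain Z g h where T: "(X, S, Z, i1, g, h) \<in> Tri C" using tri_exists s by blast
  have sz: "Z \<in> Ob C" "g \<in> Hom C S Z" using tri_shape[OF T] by auto
  have h0: "h = zm C Z (sh C X)" using tri_zm_if_split_mono[OF T s(4) e(1)] .
  obtain c where c: "c \<in> Hom C Z Y" "cmp C c g = p2" using tri_extend[OF T s(2) s(5) e(3)] by blast
  let ?t = "cmp C g i2"
  have t: "?t \<in> Hom C Y Z" using comp_in_Hom s sz by blast
  have ct: "cmp C c ?t = idm C Y" using comp_assoc[of Y S Z Y i2 g c] s sz c e by simp
  have "g = cmp C g (madd C (cmp C i1 p1) (cmp C i2 p2))" using e(4) comp_id_right sz s by simp
  also have "\<dots> = madd C (cmp C (cmp C g i1) p1) (cmp C ?t p2)"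
    using comp_madd_right[of S S Z "cmp C i1 p1" "cmp C i2 p2" g] comp_in_Hom
      comp_assoc[of S X S Z p1 i1 g] comp_assoc[of S Y S Z p2 i2 g] s sz by simp
  also have "\<dots> = cmp C ?t p2"
    using tri_comp_zm[OF T] comp_zm_left[of S X Z p1] madd_zm_left comp_in_Hom t s sz by simp
  finally have "cmp C (cmp C ?t c) g = cmp C (idm C Z) g"
    using comp_assoc[of S Z Y Z g c ?t] comp_id_left sz s c t by simp
  hence tc: "cmp C ?t c = idm C Z"
    using tri_zm_epi[OF T[unfolded h0] sz(1)] comp_in_Hom t c sz s by simp
  have "is_tri_shape C (X, S, Y, i1, p2, zm C Y (sh C X))"
    unfolding is_tri_shape_def using s by simp
  moreover have
    "tri_mor C (X, S, Z, i1, g, h) (X, S, Y, i1, p2, zm C Y (sh C X)) (idm C X) (idm C S) c"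
    unfolding tri_mor_def
    using s c comp_id_left comp_id_right h0 shm_idm comp_zm_left[of Z Y "sh C X" c] sz by simp
  moreover have "is_iso C c Z Y" unfolding is_iso_def using c t ct tc by blast
  ultimately show ?thesis using tri_isomorphic[OF T] is_iso_idm s by simp
qed

lemma tri_of_dsum:
  assumes "is_dsum C X Y S"
  shows "\<exists>i1 p2. i1 \<in> Hom C X S \<and> p2 \<in> Hom C S Y \<and> (X, S, Y, i1, p2, zm C Y (sh C X)) \<in> Tri C"
  using assms tri_of_dsum_data unfolding is_dsum_iff_dsum_data dsum_data_def by blast

text \<open>The octahedral axiom for the split inclusions \<open>A \<rightarrow> P \<rightarrow> Q\<close> exhibits the cone \<open>Y'\<close> of
  \<open>A \<rightarrow> Q\<close> as \<open>B \<oplus> C'\<close>; the connecting map of \<open>A \<rightarrow> Q \<rightarrow> Y'\<close> vanishes because it factors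
  through the zero connecting map of \<open>P \<rightarrow> Q \<rightarrow> C'\<close> up to the split mono \<open>jA[1]\<close>.\<close>

lemma is_dsum_assoc:
  assumes d1: "is_dsum C A B P" and d2: "is_dsum C P C' Q" and d3: "is_dsum C B C' R"
  shows "is_dsum C A R Q"
proof -
  obtain pA pB jA jB where a: "dsum_data C A B P pA pB jA jB"
    using d1 is_dsum_iff_dsum_data by blast
  obtain qP qC kP kC where b: "dsum_data C P C' Q qP qC kP kC"
    using d2 is_dsum_iff_dsum_data by blast
  have s: "A \<in> Ob C" "B \<in> Ob C" "P \<in> Ob C" "C' \<in> Ob C" "Q \<in> Ob C" "jA \<in> Hom C A P"
    "kP \<in> Hom C P Q" "pB \<in> Hom C P B" "pA \<in> Hom C P A" "cmp C pA jA = idm C A"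
    using a b unfolding dsum_data_def by auto
  have T1: "(A, P, B, jA, pB, zm C B (sh C A)) \<in> Tri C" using tri_of_dsum_data[OF a] .
  have T2: "(P, Q, C', kP, qC, zm C C' (sh C P)) \<in> Tri C" using tri_of_dsum_data[OF b] .
  obtain Y' l l' where T3: "(A, Q, Y', cmp C kP jA, l, l') \<in> Tri C"
    using tri_exists s comp_in_Hom by meson
  have s3: "Y' \<in> Ob C" "l' \<in> Hom C Y' (sh C A)" using tri_shape[OF T3] by auto
  obtain u v where o: "(B, Y', C', u, v, cmp C (shm C pB) (zm C C' (sh C P))) \<in> Tri C"
    "cmp C (zm C C' (sh C P)) v = cmp C (shm C jA) l'" using octahedral[OF T1 T2 T3] by blast
  have sv: "v \<in> Hom C Y' C'" using tri_shape[OF o(1)] by auto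
  have "cmp C (shm C pB) (zm C C' (sh C P)) = zm C C' (sh C B)"
    using comp_zm_right shm_in_Hom s by simp
  hence "(B, Y', C', u, v, zm C C' (sh C B)) \<in> Tri C" using o by simp
  hence dBC: "is_dsum C B C' Y'" using is_dsum_if_tri_zm by blast
  have z: "cmp C (shm C jA) l' = zm C Y' (sh C P)"
    using o(2) comp_zm_left[of Y' C' "sh C P" v] sv s s3 by simp
  have "cmp C (shm C pA) (shm C jA) = idm C (sh C A)"
    using shm_comp[of A P A jA pA, symmetric] s shm_idm by simp
  hence "l' = cmp C (cmp C (shm C pA) (shm C jA)) l'" using comp_id_left s3 s by simp
  also have "\<dots> = cmp C (shm C pA) (cmp C (shm C jA) l')"
    using comp_assoc[of Y' "sh C A" "sh C P" "sh C A" l' "shm C jA" "shm C pA"] s s3 shm_in_Hom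
      by simp
  also have "\<dots> = zm C Y' (sh C A)" using z comp_zm_right shm_in_Hom s s3 by simp
  finally have "(A, Q, Y', cmp C kP jA, l, zm C Y' (sh C A)) \<in> Tri C" using T3 by simp
  hence "is_dsum C A Y' Q" using is_dsum_if_tri_zm by blast
  moreover have "isomorphic C Y' R" using is_dsum_unique dBC d3 by blast
  ultimately show ?thesis using is_dsum_isomorphic_right by blast
qed

inductive is_msum :: "'o multiset \<Rightarrow> 'o \<Rightarrow> bool" where
  msum_empty: "is_zero_obj C Z \<Longrightarrow> is_msum {#} Z"
| msum_add: "is_msum M S \<Longrightarrow> X \<in> Ob C \<Longrightarrow> is_dsum C S X S' \<Longrightarrow> is_msum (add_mset X M) S'"

lemma is_msum_in_Ob: "is_msum M S \<Longrightarrow> S \<in> Ob C \<and> set_mset M \<subseteq> Ob C"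
  by (induction rule: is_msum.induct) (auto simp: is_zero_obj_in_Ob is_dsum_in_Ob)

lemma is_msum_exists: "set_mset M \<subseteq> Ob C \<Longrightarrow> \<exists>S. is_msum M S"
proof (induction M)
  case empty thus ?case using zero_obj_exists msum_empty by blast
next
  case (add X M)
  then obtain S where "is_msum M S" by auto
  moreover have "X \<in> Ob C" using add by simp
  moreover obtain S' where "is_dsum C S X S'"
    using is_dsum_exists is_msum_in_Ob calculation by blast
  ultimately show ?case using msum_add by blast
qed

lemma is_msum_isomorphic: "\<lbrakk>is_msum M S; isomorphic C S S'\<rbrakk> \<Longrightarrow> is_msum M S'"
proof (induction rule: is_msum.induct)
  case (msum_empty Z) thus ?case using is_zero_obj_isomorphic is_msum.msum_empty by blast
next
  case (msum_add M S X S'') thus ?case using is_dsum_isomorphic_sum is_msum.msum_add by blast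
qed

lemma is_dsum_swap_right:
  assumes "is_dsum C S2 X S1" "is_dsum C S1 Y S'" "is_dsum C S2 Y S3"
  shows "is_dsum C S3 X S'"
proof -
  have o: "X \<in> Ob C" "Y \<in> Ob C" "S3 \<in> Ob C" using assms is_dsum_in_Ob by auto
  obtain R where R: "is_dsum C X Y R" using is_dsum_exists o by blast
  have 1: "is_dsum C S2 R S'" using is_dsum_assoc[OF assms(1,2) R] .
  obtain S4 where S4: "is_dsum C S3 X S4" using is_dsum_exists o by blast
  have "is_dsum C S2 R S4" using is_dsum_assoc[OF assms(3) S4 is_dsum_commute[OF R]] .
  hence "isomorphic C S4 S'" using is_dsum_unique[OF _ 1] by blast
  thus ?thesis using is_dsum_isomorphic_sum[OF S4] by blast
qed

lemma is_msum_remove: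
  "\<lbrakk>is_msum N S'; X \<in># N\<rbrakk> \<Longrightarrow> \<exists>S0. is_msum (N - {#X#}) S0 \<and> is_dsum C S0 X S'"
proof (induction arbitrary: X rule: is_msum.induct)
  case (msum_empty Z) thus ?case by simp
next
  case (msum_add M S Y S')
  show ?case
  proof (cases "X = Y")
    case True thus ?thesis using msum_add by auto
  next
    case False
    hence "X \<in># M" using msum_add by simp
    then obtain S2 where S2: "is_msum (M - {#X#}) S2" "is_dsum C S2 X S" using msum_add by blast
    obtain S3 where S3: "is_dsum C S2 Y S3"
      using is_dsum_exists msum_add is_dsum_in_Ob S2 by blast
    have "is_msum (add_mset Y (M - {#X#})) S3" using is_msum.msum_add S2 S3 msum_add by blast
    moreover have "add_mset Y (M - {#X#}) = add_mset Y M - {#X#}" using False by simp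
    moreover have "is_dsum C S3 X S'" using is_dsum_swap_right S2 msum_add S3 by blast
    ultimately show ?thesis by auto
  qed
qed

lemma is_msum_unique: "\<lbrakk>is_msum M S; is_msum M S'\<rbrakk> \<Longrightarrow> isomorphic C S S'"
proof (induction arbitrary: S' rule: is_msum.induct)
  case (msum_empty Z)
  from msum_empty(2) have "is_zero_obj C S'" by (cases rule: is_msum.cases) auto
  thus ?case using is_zero_obj_unique msum_empty(1) by blast
next
  case (msum_add M S X S1)
  obtain S0 where "is_msum M S0" "is_dsum C S0 X S'"
    using is_msum_remove[OF msum_add.prems, of X] by auto
  moreover have "isomorphic C S S0" using msum_add calculation by blast
  ultimately show ?case using is_dsum_isomorphic_left is_dsum_unique msum_add by blast
qed

lemma is_msum_union: "\<lbrakk>is_msum N B; is_msum M A; is_dsum C A B S\<rbrakk> \<Longrightarrow> is_msum (M + N) S"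
proof (induction arbitrary: S rule: is_msum.induct)
  case (msum_empty Z)
  have "is_dsum C A Z A"
    using is_dsum_commute is_dsum_zero_left msum_empty is_msum_in_Ob by blast
  hence "isomorphic C A S" using is_dsum_unique msum_empty by blast
  thus ?case using is_msum_isomorphic msum_empty by simp
next
  case (msum_add N' B0 X B)
  obtain S0 where S0: "is_dsum C A B0 S0" using is_dsum_exists msum_add is_msum_in_Ob by blast
  have m: "is_msum (M + N') S0" using msum_add S0 by blast
  obtain S1 where S1: "is_dsum C S0 X S1" using is_dsum_exists msum_add is_msum_in_Ob m by blast
  have "is_msum (add_mset X (M + N')) S1" using is_msum.msum_add m S1 msum_add by blast
  moreover have "is_dsum C A B S1" using is_dsum_assoc[OF S0 S1 msum_add(3)] .
  hence "isomorphic C S1 S" using is_dsum_unique msum_add by blast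
  ultimately show ?case using is_msum_isomorphic by simp
qed

lemma is_msum_single:
  assumes "X \<in> Ob C"
  shows "is_msum {#X#} X"
proof -
  obtain Z where Z: "is_zero_obj C Z" using zero_obj_exists by blast
  show ?thesis using msum_add[OF msum_empty[OF Z] assms is_dsum_zero_left[OF Z assms]] by simp
qed

lemma is_msum_power:
  assumes "X \<in> Ob C"
  shows "n \<ge> 1 \<Longrightarrow> \<exists>S. is_power C X n S \<and> is_msum (repeat_mset n {#X#}) S"
proof (induction n rule: nat_induct_at_least)
  case base thus ?case using is_msum_single assms pw_one by fastforce
next
  case (Suc n)
  then obtain S where S: "is_power C X n S" "is_msum (repeat_mset n {#X#}) S" by blast
  obtain S' where S': "is_dsum C S X S'" using is_dsum_exists is_msum_in_Ob S assms by blast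
  have "is_power C X (Suc n) S'" using pw_suc[OF S(1) S'] .
  moreover have "is_msum (add_mset X (repeat_mset n {#X#})) S'"
    using msum_add S S' assms by blast
  ultimately show ?case by auto
qed

end

section \<open>Subcategories\<close>

context triangulated_category
begin

lemma tri_subcat_in_Ob: "\<lbrakk>tri_subcat C D; X \<in> D\<rbrakk> \<Longrightarrow> X \<in> Ob C"
  unfolding tri_subcat_def by blast

lemma tri_subcat_sh: "\<lbrakk>tri_subcat C D; X \<in> D\<rbrakk> \<Longrightarrow> sh C X \<in> D"
  unfolding tri_subcat_def by blast

lemma tri_subcat_sh_inv: "\<lbrakk>tri_subcat C D; X \<in> Ob C; sh C X \<in> D\<rbrakk> \<Longrightarrow> X \<in> D"
  unfolding tri_subcat_def by blast

lemma tri_subcat_isomorphic: "\<lbrakk>tri_subcat C D; X \<in> D; isomorphic C X Y\<rbrakk> \<Longrightarrow> Y \<in> D"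
  unfolding tri_subcat_def by blast

lemma tri_subcat_cone: "\<lbrakk>tri_subcat C D; (X, Y, Z, f, g, h) \<in> Tri C; X \<in> D; Y \<in> D\<rbrakk> \<Longrightarrow> Z \<in> D"
  unfolding tri_subcat_def by blast

lemma tri_subcat_extension:
  assumes "tri_subcat C D" "(X, Y, Z, f, g, h) \<in> Tri C" "X \<in> D" "Z \<in> D"
  shows "Y \<in> D"
  using tri_subcat_cone[OF assms(1) tri_rotate[OF tri_rotate[OF assms(2)]]]
    assms tri_subcat_sh_inv tri_subcat_sh tri_shape by blast

lemma tri_subcat_dsum: "\<lbrakk>tri_subcat C D; is_dsum C X Y S; X \<in> D; Y \<in> D\<rbrakk> \<Longrightarrow> S \<in> D"
  using tri_of_dsum tri_subcat_extension by metis

lemma tri_subcat_dsum_cancel: "\<lbrakk>tri_subcat C D; is_dsum C X Y S; X \<in> D; S \<in> D\<rbrakk> \<Longrightarrow> Y \<in> D"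
  using tri_of_dsum tri_subcat_cone by metis

lemma dense_subcat_tri_subcat: "dense_subcat C D \<Longrightarrow> tri_subcat C D"
  unfolding dense_subcat_def by blast

lemma dense_subcat_zero_obj:
  assumes D: "dense_subcat C D" and Z: "is_zero_obj C Z"
  shows "Z \<in> D"
proof -
  obtain V S where "is_dsum C Z V S" "S \<in> D"
    using D Z is_zero_obj_in_Ob unfolding dense_subcat_def by blast
  thus ?thesis
    using tri_subcat_cone[OF dense_subcat_tri_subcat[OF D] tri_idm[OF _ Z]] is_dsum_in_Ob by blast
qed

text \<open>The cone \<open>W\<close> of the idempotent \<open>jV \<circ> pV\<close> on \<open>S = X \<oplus> V \<in> D\<close> lies in \<open>D\<close>, and the
  octahedral axiom identifies it with \<open>X[1] \<oplus> X\<close>.\<close>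

lemma dense_subcat_dsum_sh:
  assumes D: "dense_subcat C D" and X: "X \<in> Ob C"
  shows "\<exists>W\<in>D. is_dsum C X (sh C X) W"
proof -
  obtain V S where "is_dsum C V X S" "S \<in> D"
    using D X is_dsum_commute unfolding dense_subcat_def by blast
  then obtain pV pX jV jX where d: "dsum_data C V X S pV pX jV jX" and SD: "S \<in> D"
    using is_dsum_iff_dsum_data by blast
  have s: "V \<in> Ob C" "S \<in> Ob C" "pV \<in> Hom C S V" "jV \<in> Hom C V S"
    using d unfolding dsum_data_def by auto
  obtain W l l' where T: "(S, S, W, cmp C jV pV, l, l') \<in> Tri C"
    using tri_exists s comp_in_Hom by meson
  have "is_dsum C (sh C X) X W"
  proof (rule octahedral_dsum[OF tri_rotate[OF tri_of_dsum_data[OF dsum_data_swap[OF d]]]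
        tri_of_dsum_data[OF d] T])
    show "cmp C (shm C (zm C V (sh C X))) (zm C X (sh C V)) = zm C X (sh C (sh C X))"
      using shm_zm comp_zm_left s X by simp
  qed
  moreover have "W \<in> D" using tri_subcat_cone[OF dense_subcat_tri_subcat[OF D] T SD SD] .
  ultimately show ?thesis using is_dsum_commute by blast
qed

definition msum_in :: "'o set \<Rightarrow> 'o multiset \<Rightarrow> bool" where
  "msum_in D M \<longleftrightarrow> (\<exists>S. is_msum M S \<and> S \<in> D)"

lemma msum_in_all: "\<lbrakk>tri_subcat C D; msum_in D M; is_msum M S\<rbrakk> \<Longrightarrow> S \<in> D"
  unfolding msum_in_def using is_msum_unique tri_subcat_isomorphic by blast

lemma msum_in_union:
  assumes D: "tri_subcat C D" and "msum_in D M" "msum_in D N"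
  shows "msum_in D (M + N)"
proof -
  obtain A B where AB: "is_msum M A" "A \<in> D" "is_msum N B" "B \<in> D"
    using assms unfolding msum_in_def by blast
  obtain S where S: "is_dsum C A B S" using is_dsum_exists AB is_msum_in_Ob by blast
  show ?thesis
    unfolding msum_in_def using is_msum_union[OF AB(3) AB(1) S] tri_subcat_dsum[OF D S] AB by blast
qed

lemma msum_in_cancel:
  assumes D: "tri_subcat C D" and "msum_in D (M + N)" "msum_in D M" "set_mset N \<subseteq> Ob C"
  shows "msum_in D N"
proof -
  obtain A where A: "is_msum M A" "A \<in> D" using assms unfolding msum_in_def by blast
  obtain B where B: "is_msum N B" using is_msum_exists assms by blast
  obtain S where S: "is_dsum C A B S" using is_dsum_exists A B is_msum_in_Ob by blast
  have "S \<in> D" using msum_in_all[OF D assms(2) is_msum_union[OF B A(1) S]] .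
  thus ?thesis unfolding msum_in_def using tri_subcat_dsum_cancel[OF D S A(2)] B by blast
qed

lemma msum_in_empty: "dense_subcat C D \<Longrightarrow> msum_in D {#}"
  unfolding msum_in_def using zero_obj_exists msum_empty dense_subcat_zero_obj by blast

lemma msum_in_single: "\<lbrakk>tri_subcat C D; X \<in> D\<rbrakk> \<Longrightarrow> msum_in D {#X#}"
  unfolding msum_in_def using is_msum_single tri_subcat_in_Ob by blast

lemma msum_in_repeat:
  assumes "dense_subcat C D" "msum_in D M"
  shows "msum_in D (repeat_mset n M)"
proof (induction n)
  case 0 thus ?case using msum_in_empty assms by simp
next
  case (Suc n)
  thus ?case using msum_in_union[OF dense_subcat_tri_subcat[OF assms(1)] assms(2)] by simp
qed

lemma msum_in_pair_sh:
  assumes D: "dense_subcat C D" and X: "X \<in> Ob C"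
  shows "msum_in D {#X, sh C X#}"
proof -
  obtain W where W: "W \<in> D" "is_dsum C X (sh C X) W" using dense_subcat_dsum_sh assms by blast
  have "is_msum (add_mset (sh C X) {#X#}) W"
    using msum_add[OF is_msum_single[OF X] _ W(2)] X by simp
  thus ?thesis unfolding msum_in_def using W by (auto simp: add_mset_commute)
qed

lemma msum_in_plus_sh:
  assumes D: "dense_subcat C D"
  shows "set_mset M \<subseteq> Ob C \<Longrightarrow> msum_in D (M + image_mset (sh C) M)"
proof (induction M)
  case empty thus ?case using msum_in_empty D by simp
next
  case (add X M)
  have "msum_in D (M + image_mset (sh C) M)" using add by simp
  moreover have "msum_in D {#X, sh C X#}" using msum_in_pair_sh D add by simp
  ultimately have "msum_in D (M + image_mset (sh C) M + {#X, sh C X#})"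
    using msum_in_union dense_subcat_tri_subcat D by blast
  thus ?case by (simp add: add_mset_commute)
qed

lemma msum_in_swap_sh:
  assumes D: "dense_subcat C D" and P: "set_mset P \<subseteq> Ob C" and Q: "set_mset Q \<subseteq> Ob C"
    and PQ: "msum_in D (Q + image_mset (sh C) P)"
  shows "msum_in D (P + image_mset (sh C) Q)"
proof -
  have "msum_in D ((P + image_mset (sh C) P) + (Q + image_mset (sh C) Q))"
    using msum_in_union dense_subcat_tri_subcat[OF D] msum_in_plus_sh[OF D] P Q by blast
  hence "msum_in D ((Q + image_mset (sh C) P) + (P + image_mset (sh C) Q))" by (simp add: ac_simps)
  moreover have "set_mset (P + image_mset (sh C) Q) \<subseteq> Ob C" using P Q sh_in_Ob by auto
  ultimately show ?thesis using msum_in_cancel[OF dense_subcat_tri_subcat[OF D] _ PQ] by blast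
qed

text \<open>With \<open>P = V \<oplus> V[1]\<close> and \<open>Q = U \<oplus> U[1]\<close> in \<open>D\<close>, the octahedral axiom shows
  \<open>cone(U \<rightarrow> P) \<cong> W \<oplus> V[1]\<close> and \<open>cone(Q \<rightarrow> P) \<cong> U[2] \<oplus> cone(U \<rightarrow> P)\<close>; the latter cone
  lies in \<open>D\<close>.\<close>

lemma msum_in_tri_shifted:
  assumes D: "dense_subcat C D" and T: "(U, V, W, f, g, h) \<in> Tri C"
  shows "msum_in D {#sh C (sh C U), sh C V, W#}"
proof -
  have s: "U \<in> Ob C" "V \<in> Ob C" "W \<in> Ob C" "f \<in> Hom C U V" "g \<in> Hom C V W"
    using tri_shape[OF T] by auto
  obtain P where P: "P \<in> D" "is_dsum C V (sh C V) P" using dense_subcat_dsum_sh D s by blast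
  then obtain p1 p2 i1 i2 where dP: "dsum_data C V (sh C V) P p1 p2 i1 i2"
    using is_dsum_iff_dsum_data by blast
  have sP: "P \<in> Ob C" "i1 \<in> Hom C V P" using dP unfolding dsum_data_def by auto
  obtain Y1 l l' where T1: "(U, P, Y1, cmp C i1 f, l, l') \<in> Tri C"
    using tri_exists s sP comp_in_Hom by meson
  have s1: "Y1 \<in> Ob C" "l' \<in> Hom C Y1 (sh C U)" using tri_shape[OF T1] by auto
  have Y1: "is_dsum C W (sh C V) Y1"
  proof (rule octahedral_dsum[OF T tri_of_dsum_data[OF dP] T1])
    show "cmp C (shm C g) (zm C (sh C V) (sh C V)) = zm C (sh C V) (sh C W)"
      using comp_zm_right shm_in_Hom s by simp
  qed
  obtain Q where Q: "Q \<in> D" "is_dsum C U (sh C U) Q" using dense_subcat_dsum_sh D s by blast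
  then obtain q1 q2 j1 j2 where dQ: "dsum_data C U (sh C U) Q q1 q2 j1 j2"
    using is_dsum_iff_dsum_data by blast
  have sQ: "Q \<in> Ob C" "q1 \<in> Hom C Q U" using dQ unfolding dsum_data_def by auto
  obtain Y2 l2 l2' where T2: "(Q, P, Y2, cmp C (cmp C i1 f) q1, l2, l2') \<in> Tri C"
    using tri_exists s sP sQ comp_in_Hom by meson
  have Y2: "is_dsum C (sh C (sh C U)) Y1 Y2"
  proof (rule octahedral_dsum[OF tri_rotate[OF tri_of_dsum_data[OF dsum_data_swap[OF dQ]]] T1 T2])
    show "cmp C (shm C (zm C U (sh C (sh C U)))) l' = zm C Y1 (sh C (sh C (sh C U)))"
      using shm_zm comp_zm_left s1 s by simp
  qed
  have "is_msum {#sh C (sh C U), sh C V, W#} Y2"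
    using msum_add[OF msum_add[OF is_msum_single[OF s(3)] _ Y1] _ is_dsum_commute[OF Y2]] s
    by (simp add: add_mset_commute)
  moreover have "Y2 \<in> D"
    using tri_subcat_cone[OF dense_subcat_tri_subcat[OF D] T2 Q(1) P(1)] .
  ultimately show ?thesis unfolding msum_in_def by blast
qed

lemma msum_in_tri:
  assumes D: "dense_subcat C D" and T: "(U, V, W, f, g, h) \<in> Tri C"
  shows "msum_in D ({#V#} + image_mset (sh C) {#U, W#})"
proof -
  have s: "U \<in> Ob C" "V \<in> Ob C" "W \<in> Ob C" using tri_shape[OF T] by auto
  have Dt: "tri_subcat C D" using dense_subcat_tri_subcat[OF D] .
  have "msum_in D ({#sh C U, sh C (sh C U)#} + {#U, W, sh C V#})"
    using msum_in_union[OF Dt msum_in_tri_shifted[OF D T] msum_in_pair_sh[OF D s(1)]]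
    by (simp add: add_mset_commute)
  hence "msum_in D {#U, W, sh C V#}"
    by (rule msum_in_cancel[OF Dt _ msum_in_pair_sh[OF D sh_in_Ob[OF s(1)]]]) (use s in auto)
  hence "msum_in D ({#U, W#} + image_mset (sh C) {#V#})" by (simp add: add_mset_commute)
  thus ?thesis using msum_in_swap_sh[OF D, of "{#V#}" "{#U, W#}"] s by simp
qed

end

section \<open>Rational linear combinations\<close>

abbreviation qscale :: "rat \<Rightarrow> ('o \<Rightarrow> rat) \<Rightarrow> ('o \<Rightarrow> rat)" where
  "qscale c v \<equiv> (\<lambda>x. c * v x)"

definition count_vec :: "'o multiset \<Rightarrow> ('o \<Rightarrow> rat)" where
  "count_vec M = (\<lambda>x. of_nat (count M x))"

lemma count_vec_empty [simp]: "count_vec {#} = 0"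
  unfolding count_vec_def by (rule ext) simp

lemma count_vec_union [simp]: "count_vec (M + N) = count_vec M + count_vec N"
  unfolding count_vec_def by (rule ext) simp

lemma count_vec_add_mset [simp]: "count_vec (add_mset X M) = gen X + count_vec M"
  unfolding count_vec_def gen_def by (rule ext) simp

lemma count_vec_repeat_mset [simp]: "count_vec (repeat_mset n M) = qscale (of_nat n) (count_vec M)"
  unfolding count_vec_def by (rule ext) simp

lemma qspan_uminus: "v \<in> qspan S \<Longrightarrow> - v \<in> qspan S"
  using qs_smult[where c = "-1"] by (simp add: fun_Compl_def)

lemma qspan_diff: "\<lbrakk>v \<in> qspan S; w \<in> qspan S\<rbrakk> \<Longrightarrow> v - w \<in> qspan S"
  using qs_add[OF _ qspan_uminus, of v S w] by (simp only: diff_conv_add_uminus)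

lemma qspan_mono:
  assumes "S \<subseteq> T" "v \<in> qspan S"
  shows "v \<in> qspan T"
  using assms(2) by induction (use assms(1) in \<open>blast intro: qspan.intros\<close>)+

lemma qspan_multiple_eq_count_vec_diff:
  assumes v: "v \<in> qspan G"
    and G: "\<And>g. g \<in> G \<Longrightarrow> \<exists>P Q. R P Q \<and> g = count_vec P - count_vec Q"
    and R_empty: "R {#} {#}"
    and R_union: "\<And>P Q P' Q'. \<lbrakk>R P Q; R P' Q'\<rbrakk> \<Longrightarrow> R (P + P') (Q + Q')"
    and R_sym: "\<And>P Q. R P Q \<Longrightarrow> R Q P"
    and R_repeat: "\<And>n P Q. R P Q \<Longrightarrow> R (repeat_mset n P) (repeat_mset n Q)"
  shows "\<exists>N::nat. N > 0 \<and> (\<exists>P Q. R P Q \<and> qscale (of_nat N) v = count_vec P - count_vec Q)"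
  using v
proof (induction rule: qspan.induct)
  case qs_zero
  show ?case using R_empty by (intro exI[of _ 1]) (auto simp: fun_eq_iff)
next
  case (qs_gen v)
  then obtain P Q where "R P Q" "v = count_vec P - count_vec Q" using G by blast
  thus ?case by (intro exI[of _ 1]) auto
next
  case (qs_add v w)
  then obtain N1 P1 Q1 N2 P2 Q2 where
    a: "N1 > 0" "R P1 Q1" "qscale (of_nat N1) v = count_vec P1 - count_vec Q1" and
    b: "N2 > 0" "R P2 Q2" "qscale (of_nat N2) w = count_vec P2 - count_vec Q2"
    by blast
  let ?P = "repeat_mset N2 P1 + repeat_mset N1 P2" and ?Q = "repeat_mset N2 Q1 + repeat_mset N1 Q2"
  have "qscale (of_nat (N1 * N2)) (v + w) = count_vec ?P - count_vec ?Q"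
  proof
    fix x
    have eqs: "of_nat N1 * v x = count_vec P1 x - count_vec Q1 x"
      "of_nat N2 * w x = count_vec P2 x - count_vec Q2 x"
      using fun_cong[OF a(3), of x] fun_cong[OF b(3), of x] by simp_all
    have "of_nat (N1 * N2) * (v + w) x
        = of_nat N2 * (of_nat N1 * v x) + of_nat N1 * (of_nat N2 * w x)"
      by (simp add: algebra_simps)
    also have "\<dots> = (count_vec ?P - count_vec ?Q) x"
      unfolding eqs by (simp add: algebra_simps)
    finally show "of_nat (N1 * N2) * (v + w) x = (count_vec ?P - count_vec ?Q) x" .
  qed
  moreover have "R ?P ?Q" using R_union R_repeat a b by blast
  moreover have "N1 * N2 > 0" using a b by simp
  ultimately show ?case by blast
next
  case (qs_smult v c)
  then obtain N P Q where a: "N > 0" "R P Q" "qscale (of_nat N) v = count_vec P - count_vec Q"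
    by blast
  obtain p q where pq: "quotient_of c = (p, q)" by (cases "quotient_of c") auto
  have q: "q > 0" and c: "of_int q * c = of_int p"
    using quotient_of_denom_pos[OF pq] quotient_of_div[OF pq] by simp_all
  \<comment> \<open>one of the two repetition counts is zero, which avoids a case split on the sign of \<open>p\<close>\<close>
  let ?P = "repeat_mset (nat p) P + repeat_mset (nat (- p)) Q"
  let ?Q = "repeat_mset (nat p) Q + repeat_mset (nat (- p)) P"
  have "qscale (of_nat (nat q * N)) (qscale c v) = count_vec ?P - count_vec ?Q"
  proof
    fix x
    have eq: "of_nat N * v x = count_vec P x - count_vec Q x" using fun_cong[OF a(3), of x] by simp
    have "of_nat (nat q * N) * (c * v x) = (of_int q * c) * (of_nat N * v x)"
      using q by simp
    also have "\<dots> = (of_nat (nat p) - of_nat (nat (- p))) * (count_vec P x - count_vec Q x)"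
      unfolding c eq by (cases "p \<ge> 0") auto
    also have "\<dots> = (count_vec ?P - count_vec ?Q) x"
      by (simp add: algebra_simps)
    finally show "of_nat (nat q * N) * (c * v x) = (count_vec ?P - count_vec ?Q) x" .
  qed
  moreover have "R ?P ?Q" using R_union R_repeat R_sym a(2) by blast
  moreover have "nat q * N > 0" using q a by simp
  ultimately show ?case by blast
qed

lemma set_mset_repeat_mset_subset: "set_mset (repeat_mset n M) \<subseteq> set_mset M"
  by (induction n) auto

section \<open>Relations in the rational Grothendieck group\<close>

definition rel_gens :: "('o, 'm) tricat \<Rightarrow> ('o \<Rightarrow> rat) set" where
  "rel_gens C = {gen Y - gen X | X Y. isomorphic C X Y} \<union>
                {gen V - gen U - gen W | U V W f g h. (U, V, W, f, g, h) \<in> Tri C}"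

lemma relsQ_eq_qspan_rel_gens: "relsQ C = qspan (rel_gens C)"
  unfolding relsQ_def rel_gens_def ..

lemma relsQ_zero: "0 \<in> relsQ C"
  unfolding relsQ_def by (rule qs_zero)

lemma relsQ_add: "\<lbrakk>a \<in> relsQ C; b \<in> relsQ C\<rbrakk> \<Longrightarrow> a + b \<in> relsQ C"
  unfolding relsQ_def by (rule qs_add)

lemma relsQ_diff: "\<lbrakk>a \<in> relsQ C; b \<in> relsQ C\<rbrakk> \<Longrightarrow> a - b \<in> relsQ C"
  unfolding relsQ_def by (rule qspan_diff)

lemma relsQ_uminus: "a \<in> relsQ C \<Longrightarrow> - a \<in> relsQ C"
  unfolding relsQ_def by (rule qspan_uminus)

lemma relsQ_scale: "a \<in> relsQ C \<Longrightarrow> qscale c a \<in> relsQ C"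
  unfolding relsQ_def by (rule qs_smult)

lemma rel_isomorphic: "isomorphic C X Y \<Longrightarrow> gen Y - gen X \<in> relsQ C"
  unfolding relsQ_eq_qspan_rel_gens rel_gens_def by (rule qs_gen) blast

lemma rel_tri: "(U, V, W, f, g, h) \<in> Tri C \<Longrightarrow> gen V - gen U - gen W \<in> relsQ C"
  unfolding relsQ_eq_qspan_rel_gens rel_gens_def by (rule qs_gen) blast

lemma gcls_eq_iff: "gcls C a = gcls C b \<longleftrightarrow> a - b \<in> relsQ C"
proof
  assume "gcls C a = gcls C b"
  moreover have "a \<in> gcls C a" unfolding gcls_def using qs_zero relsQ_def by force
  ultimately obtain r where "r \<in> relsQ C" "a = b + r" unfolding gcls_def by blast
  thus "a - b \<in> relsQ C" by simp
next
  assume d: "a - b \<in> relsQ C"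
  show "gcls C a = gcls C b"
  proof (intro set_eqI iffI)
    fix x assume "x \<in> gcls C a"
    then obtain r where r: "r \<in> relsQ C" "x = a + r" unfolding gcls_def by blast
    have "x = b + ((a - b) + r)" using r by (simp add: algebra_simps)
    thus "x \<in> gcls C b" unfolding gcls_def using relsQ_add[OF d r(1)] by blast
  next
    fix x assume "x \<in> gcls C b"
    then obtain r where r: "r \<in> relsQ C" "x = b + r" unfolding gcls_def by blast
    have "x = a + (r - (a - b))" using r by (simp add: algebra_simps)
    thus "x \<in> gcls C a" unfolding gcls_def using relsQ_diff[OF r(1) d] by blast
  qed
qed

lemma gcls_in_if_rel: "\<lbrakk>gcls C a \<in> H; a - b \<in> relsQ C\<rbrakk> \<Longrightarrow> gcls C b \<in> H"
  using gcls_eq_iff by metis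

lemma freeQ_gen: "X \<in> Ob C \<Longrightarrow> gen X \<in> freeQ C"
  unfolding freeQ_def by (rule qs_gen) blast

lemma freeQ_add: "\<lbrakk>a \<in> freeQ C; b \<in> freeQ C\<rbrakk> \<Longrightarrow> a + b \<in> freeQ C"
  unfolding freeQ_def by (rule qs_add)

lemma freeQ_scale: "a \<in> freeQ C \<Longrightarrow> qscale c a \<in> freeQ C"
  unfolding freeQ_def by (rule qs_smult)

lemma freeQ_zero: "0 \<in> freeQ C"
  unfolding freeQ_def by (rule qs_zero)

context triangulated_category
begin

lemma rel_zero_obj:
  assumes "is_zero_obj C Z"
  shows "gen Z \<in> relsQ C"
proof -
  have "gen Z - gen Z - gen Z \<in> relsQ C"
    using rel_tri[OF tri_idm[OF is_zero_obj_in_Ob[OF assms] assms]] .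
  from relsQ_uminus[OF this] show ?thesis by simp
qed

lemma rel_sh: "X \<in> Ob C \<Longrightarrow> gen X + gen (sh C X) \<in> relsQ C"
proof -
  assume X: "X \<in> Ob C"
  obtain Z where Z: "is_zero_obj C Z" using zero_obj_exists by blast
  have "gen Z - gen X - gen (sh C X) \<in> relsQ C" using rel_tri[OF tri_rotate[OF tri_idm[OF X Z]]] .
  from relsQ_diff[OF rel_zero_obj[OF Z] this] show ?thesis by (simp add: algebra_simps)
qed

lemma rel_dsum: "is_dsum C X Y S \<Longrightarrow> gen S - gen X - gen Y \<in> relsQ C"
  using tri_of_dsum rel_tri[of X S Y _ _ _ C] by blast

lemma rel_msum: "is_msum M S \<Longrightarrow> gen S - count_vec M \<in> relsQ C"
proof (induction rule: is_msum.induct)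
  case (msum_empty Z) thus ?case using rel_zero_obj by simp
next
  case (msum_add M S X S')
  have "(gen S' - gen S - gen X) + (gen S - count_vec M) \<in> relsQ C"
    using relsQ_add rel_dsum msum_add by blast
  moreover have
    "(gen S' - gen S - gen X) + (gen S - count_vec M) = gen S' - count_vec (add_mset X M)"
    by (rule ext) simp
  ultimately show ?case by metis
qed

lemma rel_plus_sh: "set_mset M \<subseteq> Ob C \<Longrightarrow> count_vec M + count_vec (image_mset (sh C) M) \<in> relsQ C"
proof (induction M)
  case empty
  have "count_vec {#} + count_vec (image_mset (sh C) {#}) = 0" by simp
  thus ?case using relsQ_zero by metis
next
  case (add X M)
  have X: "X \<in> Ob C" and M: "set_mset M \<subseteq> Ob C" using add.prems by simp_all
  have "(gen X + gen (sh C X)) + (count_vec M + count_vec (image_mset (sh C) M)) \<in> relsQ C"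
    using relsQ_add[OF rel_sh[OF X] add.IH[OF M]] .
  moreover have "(gen X + gen (sh C X)) + (count_vec M + count_vec (image_mset (sh C) M))
      = count_vec (add_mset X M) + count_vec (image_mset (sh C) (add_mset X M))"
    by (rule ext) simp
  ultimately show ?case by metis
qed

lemma rel_power: "is_power C U n S \<Longrightarrow> gen S - qscale (of_nat n) (gen U) \<in> relsQ C"
proof (induction rule: is_power.induct)
  case (pw_one U)
  have "gen U - qscale (of_nat (Suc 0)) (gen U) = 0" by (rule ext) simp
  thus ?case using relsQ_zero by metis
next
  case (pw_suc U n T S)
  have "(gen S - gen T - gen U) + (gen T - qscale (of_nat n) (gen U)) \<in> relsQ C"
    using relsQ_add rel_dsum pw_suc by blast
  moreover have "(gen S - gen T - gen U) + (gen T - qscale (of_nat n) (gen U))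
      = gen S - qscale (of_nat (Suc n)) (gen U)"
    by (rule ext) (simp add: algebra_simps)
  ultimately show ?case by metis
qed

text \<open>Write \<open>N a = [P] - [Q]\<close>; since \<open>[Q] + [Q[1]] = 0\<close>, \<open>N a\<close> is the class of \<open>P \<oplus> Q[1]\<close>.\<close>

lemma freeQ_multiple_rel_gen:
  assumes a: "a \<in> freeQ C"
  shows "\<exists>N::nat. N > 0 \<and> (\<exists>S \<in> Ob C. gen S - qscale (of_nat N) a \<in> relsQ C)"
proof -
  have "\<exists>N::nat. N > 0 \<and> (\<exists>P Q. (set_mset P \<subseteq> Ob C \<and> set_mset Q \<subseteq> Ob C) \<and>
      qscale (of_nat N) a = count_vec P - count_vec Q)"
  proof (rule qspan_multiple_eq_count_vec_diff)
    show "a \<in> qspan (gen ` Ob C)" using a unfolding freeQ_def .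
    fix g assume "g \<in> gen ` Ob C"
    then obtain X where "X \<in> Ob C" "g = gen X" by blast
    thus "\<exists>P Q. (set_mset P \<subseteq> Ob C \<and> set_mset Q \<subseteq> Ob C) \<and> g = count_vec P - count_vec Q"
      by (intro exI[of _ "{#X#}"] exI[of _ "{#}"]) simp
  qed (auto dest!: set_mset_repeat_mset_subset[THEN subsetD])
  then obtain N P Q where N: "N > 0" and PQ: "set_mset P \<subseteq> Ob C" "set_mset Q \<subseteq> Ob C"
    and a_eq: "qscale (of_nat N) a = count_vec P - count_vec Q"
    by blast
  have "set_mset (P + image_mset (sh C) Q) \<subseteq> Ob C" using PQ by auto
  then obtain S where S: "is_msum (P + image_mset (sh C) Q) S" using is_msum_exists by blast
  have "(gen S - count_vec (P + image_mset (sh C) Q))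
      + (count_vec Q + count_vec (image_mset (sh C) Q))
      \<in> relsQ C"
    using relsQ_add rel_msum[OF S] rel_plus_sh[OF PQ(2)] by blast
  moreover have "(gen S - count_vec (P + image_mset (sh C) Q))
      + (count_vec Q + count_vec (image_mset (sh C) Q)) = gen S - qscale (of_nat N) a"
    unfolding a_eq by (rule ext) simp
  ultimately have "gen S - qscale (of_nat N) a \<in> relsQ C" by metis
  thus ?thesis using N is_msum_in_Ob[OF S] by blast
qed

end

section \<open>The classification\<close>

definition subcat_of :: "('o, 'm) tricat \<Rightarrow> ('o \<Rightarrow> rat) set set \<Rightarrow> 'o set" where
  "subcat_of C H = {X \<in> Ob C. gcls C (gen X) \<in> H}"

lemma qsubspace_gcls_add:
  assumes "qsubspace C H" "a \<in> freeQ C" "b \<in> freeQ C" "gcls C a \<in> H" "gcls C b \<in> H"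
  shows "gcls C (a + b) \<in> H"
  using assms(1) unfolding qsubspace_def using assms(2-) by (elim conjE) blast

lemma qsubspace_gcls_scale:
  assumes "qsubspace C H" "a \<in> freeQ C" "gcls C a \<in> H"
  shows "gcls C (qscale c a) \<in> H"
  using assms(1) unfolding qsubspace_def using assms(2-) by (elim conjE) blast

lemma qsubspace_gcls_neg_gen:
  assumes "qsubspace C H" "X \<in> subcat_of C H"
  shows "gcls C (qscale (-1) (gen X)) \<in> H"
  using assms(2) qsubspace_gcls_scale[OF assms(1) freeQ_gen] unfolding subcat_of_def by blast

context triangulated_category
begin

lemma tri_subcat_subcat_of:
  assumes H: "qsubspace C H"
  shows "tri_subcat C (subcat_of C H)"
  unfolding tri_subcat_def
proof (intro conjI ballI allI impI)
  let ?D = "subcat_of C H"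
  show "?D \<subseteq> Ob C" unfolding subcat_of_def by blast
next
  fix X assume X: "X \<in> subcat_of C H"
  hence Ob: "X \<in> Ob C" unfolding subcat_of_def by blast
  have "- (gen X + gen (sh C X)) = qscale (-1) (gen X) - gen (sh C X)" by (rule ext) simp
  hence "qscale (-1) (gen X) - gen (sh C X) \<in> relsQ C" using relsQ_uminus[OF rel_sh[OF Ob]] by metis
  hence "gcls C (gen (sh C X)) \<in> H" by (rule gcls_in_if_rel[OF qsubspace_gcls_neg_gen[OF H X]])
  thus "sh C X \<in> subcat_of C H" using Ob unfolding subcat_of_def by simp
next
  fix X assume X: "X \<in> Ob C" "sh C X \<in> subcat_of C H"
  have "- (gen X + gen (sh C X)) = qscale (-1) (gen (sh C X)) - gen X" by (rule ext) simp
  hence "qscale (-1) (gen (sh C X)) - gen X \<in> relsQ C"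
    using relsQ_uminus[OF rel_sh[OF X(1)]] by metis
  hence "gcls C (gen X) \<in> H" by (rule gcls_in_if_rel[OF qsubspace_gcls_neg_gen[OF H X(2)]])
  thus "X \<in> subcat_of C H" using X unfolding subcat_of_def by simp
next
  fix X Y assume X: "X \<in> subcat_of C H" and iso: "isomorphic C X Y"
  have "gen X - gen Y \<in> relsQ C" using relsQ_uminus[OF rel_isomorphic[OF iso]] by simp
  moreover have "gcls C (gen X) \<in> H" using X unfolding subcat_of_def by blast
  ultimately have "gcls C (gen Y) \<in> H" using gcls_in_if_rel by blast
  thus "Y \<in> subcat_of C H" using iso unfolding subcat_of_def isomorphic_def by blast
next
  fix X Y Z f g h
  assume T: "(X, Y, Z, f, g, h) \<in> Tri C" and XY: "X \<in> subcat_of C H" "Y \<in> subcat_of C H"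
  have Ob: "X \<in> Ob C" "Y \<in> Ob C" and Y: "gcls C (gen Y) \<in> H"
    using XY unfolding subcat_of_def by auto
  have "gcls C (gen Y + qscale (-1) (gen X)) \<in> H"
    using qsubspace_gcls_add[OF H freeQ_gen[OF Ob(2)] freeQ_scale[OF freeQ_gen[OF Ob(1)]] Y
        qsubspace_gcls_neg_gen[OF H XY(1)]] .
  moreover have "gen Y + qscale (-1) (gen X) - gen Z = gen Y - gen X - gen Z" by (rule ext) simp
  ultimately have "gcls C (gen Z) \<in> H" using gcls_in_if_rel rel_tri[OF T] by metis
  thus "Z \<in> subcat_of C H" using tri_shape[OF T] unfolding subcat_of_def by simp
qed

lemma dense_subcat_subcat_of:
  assumes H: "qsubspace C H"
  shows "dense_subcat C (subcat_of C H)"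
  unfolding dense_subcat_def
proof (intro conjI tri_subcat_subcat_of[OF H] ballI)
  fix U assume U: "U \<in> Ob C"
  obtain S where S: "is_dsum C U (sh C U) S" using is_dsum_exists[OF U sh_in_Ob[OF U]] by blast
  have "- (gen S - gen U - gen (sh C U)) - (gen U + gen (sh C U)) \<in> relsQ C"
    using relsQ_diff[OF relsQ_uminus[OF rel_dsum[OF S]] rel_sh[OF U]] .
  moreover have "- (gen S - gen U - gen (sh C U)) - (gen U + gen (sh C U)) = 0 - gen S"
    by (simp add: algebra_simps)
  moreover have "gcls C 0 \<in> H" using H unfolding qsubspace_def by blast
  ultimately have "gcls C (gen S) \<in> H" using gcls_in_if_rel[of C 0 H "gen S"] by simp
  hence "S \<in> subcat_of C H" using is_dsum_in_Ob[OF S] unfolding subcat_of_def by simp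
  thus "\<exists>V\<in>Ob C. \<exists>S. is_dsum C U V S \<and> S \<in> subcat_of C H" using S U by auto
qed

lemma radical_subcat_subcat_of:
  assumes H: "qsubspace C H"
  shows "radical_subcat C (subcat_of C H)"
  unfolding radical_subcat_def
proof (intro conjI tri_subcat_subcat_of[OF H] ballI impI)
  fix U assume U: "U \<in> Ob C" and "\<exists>n S. n \<ge> 1 \<and> is_power C U n S \<and> S \<in> subcat_of C H"
  then obtain n S where n: "n \<ge> 1" and S: "is_power C U n S" "S \<in> subcat_of C H" by blast
  have "gen S - qscale (of_nat n) (gen U) \<in> relsQ C" using rel_power[OF S(1)] .
  moreover have "gcls C (gen S) \<in> H" using S(2) unfolding subcat_of_def by blast
  ultimately have "gcls C (qscale (of_nat n) (gen U)) \<in> H"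
    using gcls_in_if_rel relsQ_uminus by fastforce
  hence "gcls C (qscale (1 / of_nat n) (qscale (of_nat n) (gen U))) \<in> H"
    using qsubspace_gcls_scale[OF H freeQ_scale[OF freeQ_gen[OF U]]] by blast
  moreover have "qscale (1 / of_nat n) (qscale (of_nat n) (gen U)) = gen U"
    using n by (intro ext) simp
  ultimately show "U \<in> subcat_of C H" using U unfolding subcat_of_def by simp
qed

lemma im_delta_subcat_of:
  assumes H: "qsubspace C H"
  shows "im_delta C (subcat_of C H) = H"
proof
  have "b \<in> freeQ C \<and> gcls C b \<in> H" if "b \<in> qspan (gen ` subcat_of C H)" for b
    using that
  proof (induction rule: qspan.induct)
    case qs_zero show ?case using freeQ_zero[of C] H unfolding qsubspace_def by blast
  next
    case (qs_gen v) thus ?case using freeQ_gen[of _ C] unfolding subcat_of_def by auto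
  next
    case (qs_add v w) thus ?case using freeQ_add[of v C w] qsubspace_gcls_add[OF H, of v w] by blast
  next
    case (qs_smult v c)
    thus ?case using freeQ_scale[of v C c] qsubspace_gcls_scale[OF H, of v c] by blast
  qed
  thus "im_delta C (subcat_of C H) \<subseteq> H" unfolding im_delta_def by blast
next
  show "H \<subseteq> im_delta C (subcat_of C H)"
  proof
    fix h assume h: "h \<in> H"
    then obtain a where a: "a \<in> freeQ C" "h = gcls C a"
      using H unfolding qsubspace_def GQ_def by blast
    then obtain N S where N: "N > 0" and S: "S \<in> Ob C" "gen S - qscale (of_nat N) a \<in> relsQ C"
      using freeQ_multiple_rel_gen by blast
    have "gcls C (qscale (of_nat N) a) \<in> H" using qsubspace_gcls_scale[OF H a(1)] a(2) h by blast
    hence "gcls C (gen S) \<in> H" using gcls_in_if_rel relsQ_uminus[OF S(2)] by fastforce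
    hence "gen S \<in> qspan (gen ` subcat_of C H)"
      using S(1) unfolding subcat_of_def by (blast intro: qs_gen)
    hence b: "qscale (1 / of_nat N) (gen S) \<in> qspan (gen ` subcat_of C H)" by (rule qs_smult)
    have "qscale (1 / of_nat N) (gen S - qscale (of_nat N) a) \<in> relsQ C"
      using relsQ_scale[OF S(2)] .
    moreover have
      "qscale (1 / of_nat N) (gen S - qscale (of_nat N) a) = qscale (1 / of_nat N) (gen S) - a"
      using N by (intro ext) (simp add: field_simps)
    ultimately have "gcls C (qscale (1 / of_nat N) (gen S)) = h"
      using gcls_eq_iff[of C] a(2) by metis
    thus "h \<in> im_delta C (subcat_of C H)" unfolding im_delta_def using b by blast
  qed
qed

lemma radical_dense_subcat_of: "qsubspace C H \<Longrightarrow> radical_dense C (subcat_of C H)"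
  unfolding radical_dense_def using dense_subcat_subcat_of radical_subcat_subcat_of by blast


text \<open>A relation \<open>[V] - [U] - [W]\<close> is realised by \<open>P = {V}\<close>, \<open>Q = {U, W}\<close> with
  \<open>V \<oplus> U[1] \<oplus> W[1] \<in> D\<close>, and \<open>[E]\<close> for \<open>E \<in> D\<close> by \<open>P = {E}\<close>, \<open>Q = {}\<close>.\<close>

lemma qspan_rel_gens_multiple_msum_in:
  assumes D: "dense_subcat C D" and v: "v \<in> qspan (rel_gens C \<union> gen ` D)"
  shows "\<exists>N::nat. N > 0 \<and> (\<exists>P Q. (set_mset P \<subseteq> Ob C \<and> set_mset Q \<subseteq> Ob C \<and>
    msum_in D (P + image_mset (sh C) Q)) \<and> qscale (of_nat N) v = count_vec P - count_vec Q)"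
proof (rule qspan_multiple_eq_count_vec_diff[OF v])
  let ?R = "\<lambda>P Q. set_mset P \<subseteq> Ob C \<and> set_mset Q \<subseteq> Ob C \<and> msum_in D (P + image_mset (sh C) Q)"
  have Dt: "tri_subcat C D" using dense_subcat_tri_subcat[OF D] .
  fix g assume "g \<in> rel_gens C \<union> gen ` D"
  then consider (iso) X Y where "g = gen Y - gen X" "isomorphic C X Y"
    | (tri) U V W f g' h where "g = gen V - gen U - gen W" "(U, V, W, f, g', h) \<in> Tri C"
    | (obj) E where "E \<in> D" "g = gen E"
    unfolding rel_gens_def by blast
  thus "\<exists>P Q. ?R P Q \<and> g = count_vec P - count_vec Q"
  proof cases
    case iso
    have Ob: "X \<in> Ob C" "Y \<in> Ob C" using iso unfolding isomorphic_def by auto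
    obtain W where W: "W \<in> D" "is_dsum C X (sh C X) W" using dense_subcat_dsum_sh D Ob by blast
    have "is_dsum C Y (sh C X) W" using is_dsum_isomorphic_left W iso by blast
    hence "is_msum (add_mset (sh C X) {#Y#}) W"
      using msum_add[OF is_msum_single[OF Ob(2)]] Ob by simp
    hence "msum_in D ({#Y#} + image_mset (sh C) {#X#})"
      unfolding msum_in_def using W by (auto simp: add_mset_commute)
    moreover have "g = count_vec {#Y#} - count_vec {#X#}" using iso(1) by simp
    ultimately show ?thesis using Ob by (intro exI[of _ "{#Y#}"] exI[of _ "{#X#}"]) auto
  next
    case tri
    have Ob: "U \<in> Ob C" "V \<in> Ob C" "W \<in> Ob C" using tri_shape[OF tri(2)] by auto
    have "msum_in D ({#V#} + image_mset (sh C) {#U, W#})" using msum_in_tri D tri by blast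
    moreover have "g = count_vec {#V#} - count_vec {#U, W#}" using tri by (simp add: algebra_simps)
    ultimately show ?thesis using Ob by (intro exI[of _ "{#V#}"] exI[of _ "{#U, W#}"]) auto
  next
    case obj
    have "msum_in D ({#E#} + image_mset (sh C) {#})" using msum_in_single Dt obj by simp
    moreover have "g = count_vec {#E#} - count_vec {#}" using obj by simp
    ultimately show ?thesis using obj Dt tri_subcat_in_Ob
      by (intro exI[of _ "{#E#}"] exI[of _ "{#}"]) auto
  qed
next
  show "set_mset {#} \<subseteq> Ob C \<and> set_mset {#} \<subseteq> Ob C \<and> msum_in D ({#} + image_mset (sh C) {#})"
    using msum_in_empty D by simp
next
  fix P Q P' Q'
  assume R: "set_mset P \<subseteq> Ob C \<and> set_mset Q \<subseteq> Ob C \<and> msum_in D (P + image_mset (sh C) Q)"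
    "set_mset P' \<subseteq> Ob C \<and> set_mset Q' \<subseteq> Ob C \<and> msum_in D (P' + image_mset (sh C) Q')"
  have "msum_in D ((P + image_mset (sh C) Q) + (P' + image_mset (sh C) Q'))"
    using msum_in_union[OF dense_subcat_tri_subcat[OF D]] R by blast
  moreover have "(P + image_mset (sh C) Q) + (P' + image_mset (sh C) Q')
      = P + P' + image_mset (sh C) (Q + Q')"
    by (simp add: ac_simps)
  ultimately show "set_mset (P + P') \<subseteq> Ob C \<and> set_mset (Q + Q') \<subseteq> Ob C \<and>
      msum_in D (P + P' + image_mset (sh C) (Q + Q'))"
    using R by auto
next
  fix P Q
  assume "set_mset P \<subseteq> Ob C \<and> set_mset Q \<subseteq> Ob C \<and> msum_in D (P + image_mset (sh C) Q)"
  thus "set_mset Q \<subseteq> Ob C \<and> set_mset P \<subseteq> Ob C \<and> msum_in D (Q + image_mset (sh C) P)"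
    using msum_in_swap_sh[OF D] by blast
next
  fix n P Q
  assume R: "set_mset P \<subseteq> Ob C \<and> set_mset Q \<subseteq> Ob C \<and> msum_in D (P + image_mset (sh C) Q)"
  have "repeat_mset n P + image_mset (sh C) (repeat_mset n Q)
      = repeat_mset n (P + image_mset (sh C) Q)"
    by (induction n) (simp_all add: ac_simps)
  thus "set_mset (repeat_mset n P) \<subseteq> Ob C \<and> set_mset (repeat_mset n Q) \<subseteq> Ob C \<and>
      msum_in D (repeat_mset n P + image_mset (sh C) (repeat_mset n Q))"
    using R msum_in_repeat[OF D] set_mset_repeat_mset_subset by (metis subset_trans)
qed

text \<open>If \<open>[X]\<close> lies in the image of \<open>D\<close>, then \<open>N [X] = [P] - [Q]\<close> with \<open>P \<oplus> Q[1] \<in> D\<close>; thus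
  \<open>P = Q + N {X}\<close>, and cancelling \<open>Q \<oplus> Q[1] \<in> D\<close> leaves \<open>X\<^sup>N \<in> D\<close>.\<close>

lemma dense_subcat_power_in_if_gcls_in_im_delta:
  assumes D: "dense_subcat C D" and X: "X \<in> Ob C" and cls: "gcls C (gen X) \<in> im_delta C D"
  shows "\<exists>N S. N \<ge> 1 \<and> is_power C X N S \<and> S \<in> D"
proof -
  have Dt: "tri_subcat C D" using dense_subcat_tri_subcat[OF D] .
  obtain b where b: "b \<in> qspan (gen ` D)" "gcls C (gen X) = gcls C b"
    using cls unfolding im_delta_def by blast
  let ?G = "rel_gens C \<union> gen ` D"
  have "gen X - b \<in> relsQ C" using gcls_eq_iff[of C] b(2) by blast
  hence "gen X - b \<in> qspan ?G"
    unfolding relsQ_eq_qspan_rel_gens by (rule qspan_mono[rotated]) blast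
  moreover have "b \<in> qspan ?G" using b(1) qspan_mono[of "gen ` D" ?G] by auto
  ultimately have "(gen X - b) + b \<in> qspan ?G" by (rule qs_add)
  hence "gen X \<in> qspan ?G" by simp
  then obtain N P Q where N: "N > 0" and PQ: "set_mset P \<subseteq> Ob C" "set_mset Q \<subseteq> Ob C"
    and PQ_in: "msum_in D (P + image_mset (sh C) Q)"
    and X_eq: "qscale (of_nat N) (gen X) = count_vec P - count_vec Q"
    using qspan_rel_gens_multiple_msum_in[OF D] by blast
  have "P = Q + repeat_mset N {#X#}"
  proof (rule multiset_eqI)
    fix x
    have "of_nat N * gen X x = (of_nat (count P x) :: rat) - of_nat (count Q x)"
      using fun_cong[OF X_eq, of x] unfolding count_vec_def by simp
    hence "(of_nat (count P x) :: rat) = of_nat (count Q x + N * count {#X#} x)"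
      unfolding gen_def by (cases "x = X") (auto simp: algebra_simps)
    thus "count P x = count (Q + repeat_mset N {#X#}) x"
      by (simp only: of_nat_eq_iff count_union count_repeat_mset)
  qed
  with PQ_in have "msum_in D ((Q + image_mset (sh C) Q) + repeat_mset N {#X#})"
    by (simp add: ac_simps)
  hence "msum_in D (repeat_mset N {#X#})"
    using msum_in_cancel[OF Dt _ msum_in_plus_sh[OF D PQ(2)]] X set_mset_repeat_mset_subset
    by (metis set_mset_single subset_trans empty_subsetI insert_subset)
  moreover obtain S where S: "is_power C X N S" "is_msum (repeat_mset N {#X#}) S"
    using is_msum_power[OF X, of N] N by auto
  ultimately show ?thesis using msum_in_all[OF Dt] N by (intro exI[of _ N] exI[of _ S]) auto
qed

lemma radical_dense_eq_subcat_of_im_delta: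
  assumes "radical_dense C D"
  shows "D = subcat_of C (im_delta C D)"
proof
  have D: "dense_subcat C D" and rad: "radical_subcat C D"
    using assms unfolding radical_dense_def by auto
  have DOb: "D \<subseteq> Ob C" using dense_subcat_tri_subcat[OF D] unfolding tri_subcat_def by blast
  show "D \<subseteq> subcat_of C (im_delta C D)"
    unfolding subcat_of_def im_delta_def using DOb qs_gen by blast
  show "subcat_of C (im_delta C D) \<subseteq> D"
  proof
    fix X assume "X \<in> subcat_of C (im_delta C D)"
    hence X: "X \<in> Ob C" "gcls C (gen X) \<in> im_delta C D" unfolding subcat_of_def by auto
    thus "X \<in> D"
      using dense_subcat_power_in_if_gcls_in_im_delta[OF D X] rad unfolding radical_subcat_def
        by blast
  qed
qed

lemma D_of_eq_subcat_of:
  assumes H: "qsubspace C H"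
  shows "D_of C H = subcat_of C H"
  unfolding D_of_def
proof (rule the_equality)
  show "radical_dense C (subcat_of C H) \<and> im_delta C (subcat_of C H) = H"
    using radical_dense_subcat_of[OF H] im_delta_subcat_of[OF H] by blast
  show "D = subcat_of C H" if "radical_dense C D \<and> im_delta C D = H" for D
    using that radical_dense_eq_subcat_of_im_delta by metis
qed

lemma subcat_of_subset_iff:
  assumes "qsubspace C H1" "qsubspace C H2"
  shows "subcat_of C H1 \<subseteq> subcat_of C H2 \<longleftrightarrow> H1 \<subseteq> H2"
proof
  assume "subcat_of C H1 \<subseteq> subcat_of C H2"
  hence "im_delta C (subcat_of C H1) \<subseteq> im_delta C (subcat_of C H2)"
    unfolding im_delta_def using qspan_mono[of "gen ` subcat_of C H1" "gen ` subcat_of C H2"]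
      by blast
  thus "H1 \<subseteq> H2" using im_delta_subcat_of assms by simp
qed (auto simp: subcat_of_def)

end

theorem theorem1p8:
  fixes C :: "('o, 'm) tricat"
  assumes "triangulated C"
  shows "(\<forall>H. qsubspace C H \<longrightarrow> (\<exists>D. radical_dense C D \<and> im_delta C D = H))
    \<and> (\<forall>D1 D2. radical_dense C D1 \<longrightarrow> radical_dense C D2 \<longrightarrow>
          im_delta C D1 = im_delta C D2 \<longrightarrow> D1 = D2)
    \<and> (\<forall>H1 H2. qsubspace C H1 \<longrightarrow> qsubspace C H2 \<longrightarrow>
          (D_of C H1 \<subseteq> D_of C H2 \<longleftrightarrow> H1 \<subseteq> H2))"
proof -
  interpret triangulated_category C using assms by unfold_locales
  show ?thesis
    using radical_dense_subcat_of im_delta_subcat_of radical_dense_eq_subcat_of_im_delta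
      D_of_eq_subcat_of subcat_of_subset_iff
    by (intro conjI allI impI) metis+
qed

end
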